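(* Let $\alpha<_c\beta$ with $\beta/\!\!/\alpha$ an nc border strip with $n$ boxes. Then the number of words $w\in CRHW_n$ with $w(\alpha)=\beta$ equals $2^{|NE(\beta/\!\!/\alpha)|}$.
   Context: A composition is a finite sequence $\alpha=(\alpha_1,\dots,\alpha_k)$ of positive integers; $\ell(\alpha)=k$; its diagram is the set of boxes $(i,j)$, $1\le i\le\ell(\alpha)$, $1\le j\le\alpha_i$, rows top to bottom, columns left to right. For compositions $\gamma=(\gamma_1,\dots,\gamma_l)$, $\delta$ write $\gamma\lessdot_c\delta$ if $\delta=(1,\gamma_1,\dots,\gamma_l)$ or $\delta=(\gamma_1,\dots,\gamma_k+1,\dots,\gamma_l)$ with $\gamma_i\ne\gamma_k$ for all $i<k$; $<_c$ is the transitive closure. For $\gamma<_c\delta$, $\delta/\!\!/\gamma$ consists of the boxes of $\delta$ other than $(\ell(\delta)-\ell(\gamma)+i,j)$, $1\le i\le\ell(\gamma)$, $1\le j\le\gamma_i$. $\mathrm{supp}(\beta/\!\!/\alpha)$ is the set of columns containing a box of $\beta/\!\!/\alpha$; interval shape: supp is a set of consecutive integers. nc border strip: an interval shape such that (1) if $(i,1),(i,2)\in\beta/\!\!/\alpha$ then $(i,1)$ is the bottommost box of column 1 of $\beta/\!\!/\alpha$, and (2) if $(i,j),(i,j+1)\in\beta/\!\!/\alpha$ with $j\ge2$ then $(i,j)$ is the topmost box of column $j$ of $\beta/\!\!/\alpha$. $NE(\beta/\!\!/\alpha)$ is the set of $j\in\mathrm{supp}(\beta/\!\!/\alpha)$ such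 that column $j+1$ of $\beta/\!\!/\alpha$ contains at least one box and $i_1<i_2$ for all boxes $(i_1,j+1),(i_2,j)\in\beta/\!\!/\alpha$. Box-adding operators: $\mathfrak t_1(\alpha)=(1,\alpha_1,\dots,\alpha_k)$; for $i\ge2$, $\mathfrak t_i(\alpha)$ increases the leftmost part equal to $i-1$ by $1$, and is $0$ if none; $\mathfrak t_i(0)=0$. A word $w=\mathfrak t_{i_1}\cdots\mathfrak t_{i_n}$ (words are sequences; distinct sequences are distinct words) acts by $w(\alpha)=\mathfrak t_{i_1}(\cdots\mathfrak t_{i_n}(\alpha))$; it is a reverse hookword if $i_1\le\cdots\le i_{k+1}>i_{k+2}>\cdots>i_n$ for some $0\le k\le n-1$; connected if $\{i_1,\dots,i_n\}$ is a set of consecutive integers; $CRHW_n$ is the set of connected reverse hookwords of length $n$. *)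

theory Defs
  imports Main
begin

(* Compositions are lists of positive naturals; row i (1-indexed) has length alpha!(i-1). *)
definition is_comp :: "nat list \<Rightarrow> bool" where
  "is_comp a \<longleftrightarrow> (\<forall>x\<in>set a. 0 < x)"

definition ccover :: "nat list \<Rightarrow> nat list \<Rightarrow> bool" where
  "ccover g d \<longleftrightarrow> d = 1 # g \<or>
     (\<exists>k<length g. d = g[k := g!k + 1] \<and> (\<forall>i<k. g!i \<noteq> g!k))"

definition cless :: "nat list \<Rightarrow> nat list \<Rightarrow> bool" where
  "cless = tranclp ccover"

definition diagram :: "nat list \<Rightarrow> (nat \<times> nat) set" where
  "diagram a = {(i, j). 1 \<le> i \<and> i \<le> length a \<and> 1 \<le> j \<and> j \<le> a!(i-1)}"

definition skew :: "nat list \<Rightarrow> nat list \<Rightarrow> (nat \<times> nat) set" where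
  "skew d g = diagram d -
     {(length d - length g + i, j) | i j. 1 \<le> i \<and> i \<le> length g \<and> 1 \<le> j \<and> j \<le> g!(i-1)}"

definition supp :: "(nat \<times> nat) set \<Rightarrow> nat set" where
  "supp S = snd ` S"

definition interval_shape :: "(nat \<times> nat) set \<Rightarrow> bool" where
  "interval_shape S \<longleftrightarrow> (\<forall>a b c. a \<in> supp S \<and> c \<in> supp S \<and> a \<le> b \<and> b \<le> c \<longrightarrow> b \<in> supp S)"

definition nc_border_strip :: "(nat \<times> nat) set \<Rightarrow> bool" where
  "nc_border_strip S \<longleftrightarrow> interval_shape S \<and>
     (\<forall>i. (i, 1) \<in> S \<and> (i, 2) \<in> S \<longrightarrow> (\<forall>i'. (i', 1) \<in> S \<longrightarrow> i' \<le> i)) \<and>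
     (\<forall>i j. 2 \<le> j \<and> (i, j) \<in> S \<and> (i, j + 1) \<in> S \<longrightarrow> (\<forall>i'. (i', j) \<in> S \<longrightarrow> i \<le> i'))"

definition NE :: "(nat \<times> nat) set \<Rightarrow> nat set" where
  "NE S = {j \<in> supp S. (\<exists>i. (i, j + 1) \<in> S) \<and>
              (\<forall>i1 i2. (i1, j + 1) \<in> S \<and> (i2, j) \<in> S \<longrightarrow> i1 < i2)}"

(* box-adding operator t_i; None plays the role of 0 *)
definition t_op :: "nat \<Rightarrow> nat list \<Rightarrow> nat list option" where
  "t_op i a = (if i = 1 then Some (1 # a)
     else if i \<ge> 2 \<and> (i - 1) \<in> set a
       then (let k = LEAST k. k < length a \<and> a!k = i - 1 in Some (a[k := a!k + 1]))
     else None)"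

definition apply_word :: "nat list \<Rightarrow> nat list \<Rightarrow> nat list option" where
  "apply_word w a = foldr (\<lambda>i r. Option.bind r (t_op i)) w (Some a)"

definition reverse_hookword :: "nat list \<Rightarrow> bool" where
  "reverse_hookword w \<longleftrightarrow> (\<exists>k < length w.
      (\<forall>p. p < k \<longrightarrow> w!p \<le> w!(p+1)) \<and>
      (\<forall>p. k \<le> p \<and> p + 1 < length w \<longrightarrow> w!p > w!(p+1)))"

definition connected_word :: "nat list \<Rightarrow> bool" where
  "connected_word w \<longleftrightarrow> (\<exists>a b. set w = {a..b})"

definition CRHW :: "nat \<Rightarrow> nat list set" where
  "CRHW n = {w. length w = n \<and> (\<forall>i\<in>set w. 1 \<le> i) \<and> reverse_hookword w \<and> connected_word w}"

end

theory Submission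
  imports Defs "HOL-Library.Multiset"
begin

(* A composition with at most L parts is right-aligned in L rows and encoded by its
   height function (heights); t_1 then starts the bottommost empty row and t_i (i >= 2) extends
   the topmost row of length i - 1 (add_box, run_word).  With L = length beta, p and g the height
   functions of alpha and beta, w(alpha) = beta iff w runs from p to g, and row r + 1 of
   beta//alpha consists of the columns p r < j <= g r.

   A run uses the letter j once for every box of column j (run_word_count).  Runs of weakly
   increasing words are characterized by the invariant sweep_inv; in a strictly decreasing word
   the letter j moves the unique row crossing column j.

   A reverse hookword with these letter counts is determined by the set
   D of letters of its decreasing part (hook_word D).  Using the nc border strip conditions one
   shows that hook_word D runs from p to g iff D contains all spanning columns (some row has boxes
   in columns j and j + 1) and otherwise only NE columns; so there are 2^|NE| such words. *)

(* Height functions: h r is the length of row r (rows counted from 0 at the top, only rows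
   r < L are used).  add_box L i h is the operator t_i on height functions: t_1 starts the
   bottommost empty row, t_i for i >= 2 extends the topmost row of length i - 1. *)
definition add_box :: "nat \<Rightarrow> nat \<Rightarrow> (nat \<Rightarrow> nat) \<Rightarrow> (nat \<Rightarrow> nat) option" where
 "add_box L i h = (if i = 1 then (if \<exists>r<L. h r = 0 then Some (h((GREATEST r. r<L \<and> h r = 0) := 1)) else None)
   else if 2 \<le> i \<and> (\<exists>r<L. h r = i - 1) then Some (h((LEAST r. r<L \<and> h r = i - 1) := i)) else None)"

definition run_word :: "nat \<Rightarrow> nat list \<Rightarrow> (nat \<Rightarrow> nat) \<Rightarrow> (nat \<Rightarrow> nat) option" where
 "run_word L w h = foldr (\<lambda>i r. Option.bind r (add_box L i)) w (Some h)"

lemma run_word_Nil[simp]: "run_word L [] h = Some h"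
  by (simp add: run_word_def)

lemma run_word_Cons[simp]: "run_word L (i#w) h = Option.bind (run_word L w h) (add_box L i)"
  by (simp add: run_word_def)

lemma foldr_None: "foldr (\<lambda>i r. Option.bind r (add_box L i)) u None = None"
  by (induction u) auto

lemma run_word_append: "run_word L (u@v) h = Option.bind (run_word L v h) (run_word L u)"
proof (cases "run_word L v h")
  case None
  then show ?thesis by (simp add: run_word_def foldr_None)
next
  case (Some a)
  then show ?thesis by (simp add: run_word_def)
qed

lemma add_box_SomeD:
  assumes "add_box L i h = Some h'"
  shows "\<exists>y<L. h y = i - 1 \<and> 1 \<le> i \<and> h' = h(y := i) \<and>
     (i = 1 \<longrightarrow> (\<forall>r<L. h r = 0 \<longrightarrow> r \<le> y)) \<and> (2 \<le> i \<longrightarrow> (\<forall>r<L. h r = i-1 \<longrightarrow> y \<le> r))"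
proof (cases "i = 1")
  case True
  then have ex: "\<exists>r<L. h r = 0" and h': "h' = h((GREATEST r. r<L \<and> h r = 0) := 1)"
    using assms by (auto simp: add_box_def split: if_splits)
  define y where "y = (GREATEST r. r<L \<and> h r = 0)"
  from ex obtain r0 where r0: "r0 < L" "h r0 = 0" by blast
  have P: "y < L \<and> h y = 0" unfolding y_def
    by (rule GreatestI_nat[of _ r0 L]) (use r0 in auto)
  have "\<forall>r<L. h r = 0 \<longrightarrow> r \<le> y" unfolding y_def
    by (auto intro: Greatest_le_nat[of _ _ L])
  then show ?thesis using P True h' y_def by auto
next
  case False
  then have i2: "2 \<le> i" and ex: "\<exists>r<L. h r = i - 1" and h': "h' = h((LEAST r. r<L \<and> h r = i - 1) := i)"
    using assms by (auto simp: add_box_def split: if_splits)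
  define y where "y = (LEAST r. r<L \<and> h r = i - 1)"
  have P: "y < L \<and> h y = i - 1" unfolding y_def by (rule LeastI_ex) (use ex in auto)
  have "\<forall>r<L. h r = i - 1 \<longrightarrow> y \<le> r" unfolding y_def by (auto intro: Least_le)
  then show ?thesis using P i2 h' y_def by auto
qed

lemma add_box_first_col:
  assumes "y < L" "h y = 0" "\<forall>r<L. h r = 0 \<longrightarrow> r \<le> y"
  shows "add_box L 1 h = Some (h(y := 1))"
proof -
  have "(GREATEST r. r<L \<and> h r = 0) = y"
    by (rule Greatest_equality) (use assms in auto)
  then show ?thesis using assms by (auto simp: add_box_def)
qed

lemma add_box_later_col:
  assumes "2 \<le> i" "y < L" "h y = i - 1" "\<forall>r<L. h r = i - 1 \<longrightarrow> y \<le> r"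
  shows "add_box L i h = Some (h(y := i))"
proof -
  have "(LEAST r. r<L \<and> h r = i - 1) = y"
    by (rule Least_equality) (use assms in auto)
  then show ?thesis using assms by (auto simp: add_box_def)
qed

lemma run_word_mono:
  "run_word L w h = Some h' \<Longrightarrow> (\<forall>r. h r \<le> h' r) \<and> (\<forall>r. L \<le> r \<longrightarrow> h' r = h r)"
proof (induction w arbitrary: h')
  case Nil then show ?case by simp
next
  case (Cons i w)
  then obtain h1 where h1: "run_word L w h = Some h1" "add_box L i h1 = Some h'"
    by (cases "run_word L w h") auto
  from add_box_SomeD[OF h1(2)] obtain y where y: "y<L" "h1 y = i - 1" "1 \<le> i" "h' = h1(y := i)" by blast
  have "h1 y \<le> i" using y by simp
  then show ?case using Cons.IH[OF h1(1)] y
    by (auto intro: order_trans)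
qed

lemma run_word_pass:
  "run_word L w h = Some h' \<Longrightarrow> h r < j \<Longrightarrow> j \<le> h' r \<Longrightarrow> j \<in> set w"
proof (induction w arbitrary: h' j)
  case Nil then show ?case by simp
next
  case (Cons i w)
  then obtain h1 where h1: "run_word L w h = Some h1" "add_box L i h1 = Some h'"
    by (cases "run_word L w h") auto
  from add_box_SomeD[OF h1(2)] obtain y where y: "y<L" "h1 y = i - 1" "1 \<le> i" "h' = h1(y := i)" by blast
  show ?case
  proof (cases "j \<le> h1 r")
    case True then show ?thesis using Cons.IH[OF h1(1) Cons.prems(2)] by simp
  next
    case False
    then have "r = y" using Cons.prems y by (auto split: if_splits)
    then show ?thesis using False Cons.prems y by auto
  qed
qed

lemma run_word_count:
  "run_word L w h = Some h' \<Longrightarrow> count_list w j = card {r. r < L \<and> h r < j \<and> j \<le> h' r}"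
proof (induction w arbitrary: h')
  case Nil
  have "{r. r < L \<and> h r < j \<and> j \<le> h r} = {}" by auto
  then show ?case using Nil by simp
next
  case (Cons i w)
  then obtain h1 where h1: "run_word L w h = Some h1" "add_box L i h1 = Some h'"
    by (cases "run_word L w h") auto
  from add_box_SomeD[OF h1(2)] obtain y where y: "y<L" "h1 y = i - 1" "1 \<le> i" "h' = h1(y := i)" by blast
  have m: "\<forall>r. h r \<le> h1 r" using run_word_mono[OF h1(1)] by blast
  define A where "A = {r. r < L \<and> h r < j \<and> j \<le> h1 r}"
  have fin: "finite A" unfolding A_def by simp
  show ?case
  proof (cases "j = i")
    case True
    have "h y \<le> h1 y" using m by blast
    then have "h y < i" using y by simp
    then have "{r. r < L \<and> h r < j \<and> j \<le> h' r} = insert y A"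
      using y m True unfolding A_def by (auto split: if_splits intro: le_trans)
    moreover have "y \<notin> A" using y True unfolding A_def by auto
    ultimately show ?thesis using Cons.IH[OF h1(1)] True fin A_def by simp
  next
    case False
    have "{r. r < L \<and> h r < j \<and> j \<le> h' r} = A"
      using y m False unfolding A_def by (auto split: if_splits)
    then show ?thesis using Cons.IH[OF h1(1)] False A_def by simp
  qed
qed

lemma run_word_high:
  "run_word L w h = Some h' \<Longrightarrow> \<forall>x\<in>set w. k < x \<Longrightarrow> h r < k \<Longrightarrow> h' r = h r"
proof (induction w arbitrary: h')
  case Nil then show ?case by simp
next
  case (Cons i w)
  then obtain h1 where h1: "run_word L w h = Some h1" "add_box L i h1 = Some h'"
    by (cases "run_word L w h") auto
  from add_box_SomeD[OF h1(2)] obtain y where y: "y<L" "h1 y = i - 1" "1 \<le> i" "h' = h1(y := i)" by blast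
  have "h1 r = h r" using Cons.IH[OF h1(1)] Cons.prems by auto
  moreover have "k < i" using Cons.prems by auto
  ultimately have "r \<noteq> y" using y Cons.prems by auto
  then show ?case using y \<open>h1 r = h r\<close> by simp
qed

(* A row u that keeps its length v >= 1 lies below every row r that receives the box in
   column v + 1: at the moment r had length v, t_(v+1) would otherwise have extended u. *)
lemma run_word_frozen:
  "run_word L w p = Some h \<Longrightarrow> u < L \<Longrightarrow> r < L \<Longrightarrow> 1 \<le> v \<Longrightarrow> p u = v \<Longrightarrow> h u = v \<Longrightarrow>
   p r \<le> v \<Longrightarrow> v < h r \<Longrightarrow> r < u"
proof (induction w arbitrary: h)
  case Nil then show ?case by simp
next
  case (Cons i w)
  then obtain h1 where h1: "run_word L w p = Some h1" "add_box L i h1 = Some h"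
    by (cases "run_word L w p") auto
  from add_box_SomeD[OF h1(2)] obtain y where y: "y<L" "h1 y = i - 1" "1 \<le> i" "h = h1(y := i)"
    "(i = 1 \<longrightarrow> (\<forall>r<L. h1 r = 0 \<longrightarrow> r \<le> y))" "(2 \<le> i \<longrightarrow> (\<forall>r<L. h1 r = i-1 \<longrightarrow> y \<le> r))" by blast
  have m: "\<forall>r. p r \<le> h1 r" using run_word_mono[OF h1(1)] by blast
  have uy: "u \<noteq> y"
  proof
    assume "u = y"
    then have "p y = i" using Cons.prems y by simp
    moreover have "p y \<le> h1 y" using m by blast
    ultimately show False using y by simp
  qed
  then have hu: "h1 u = v" using Cons.prems y by simp
  show ?case
  proof (cases "r = y")
    case False
    then show ?thesis using Cons.IH[OF h1(1)] Cons.prems hu y by auto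
  next
    case True
    then have "v < i" using Cons.prems y by simp
    show ?thesis
    proof (cases "v < i - 1")
      case True
      then show ?thesis using Cons.IH[OF h1(1)] Cons.prems hu y \<open>r = y\<close> by auto
    next
      case False
      then have "v = i - 1" "2 \<le> i" using \<open>v < i\<close> Cons.prems by auto
      then have "y \<le> u" using y hu Cons.prems by auto
      then show ?thesis using uy \<open>r = y\<close> by simp
    qed
  qed
qed

definition heights :: "nat \<Rightarrow> nat list \<Rightarrow> nat \<Rightarrow> nat" where
  "heights L g = (\<lambda>r. if L - length g \<le> r \<and> r < L then g ! (r - (L - length g)) else 0)"

lemma apply_word_Nil[simp]: "apply_word [] a = Some a"
  by (simp add: apply_word_def)

lemma apply_word_Cons[simp]: "apply_word (i#w) a = Option.bind (apply_word w a) (t_op i)"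
  by (simp add: apply_word_def)

lemma t_op_SomeD:
  assumes "is_comp g" "t_op i g = Some d"
  shows "is_comp d \<and> length g \<le> length d \<and> (i = 1 \<longrightarrow> d = 1 # g) \<and>
    (i \<noteq> 1 \<longrightarrow> 2 \<le> i \<and> (i - 1) \<in> set g \<and> d = g[(LEAST k. k < length g \<and> g!k = i - 1) := i])"
proof (cases "i = 1")
  case True
  then show ?thesis using assms by (auto simp: t_op_def is_comp_def)
next
  case False
  then have i2: "2 \<le> i" "(i - 1) \<in> set g" and d: "d = g[(LEAST k. k < length g \<and> g!k = i - 1) := g!(LEAST k. k < length g \<and> g!k = i - 1) + 1]"
    using assms by (auto simp: t_op_def Let_def split: if_splits)
  define k where "k = (LEAST k. k < length g \<and> g!k = i - 1)"
  have "\<exists>k. k < length g \<and> g!k = i - 1" using i2 by (metis in_set_conv_nth)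
  then have K: "k < length g \<and> g!k = i - 1" unfolding k_def by (rule LeastI_ex)
  then have d': "d = g[k := i]" using d k_def i2 by simp
  have "is_comp d" using assms(1) d' i2 unfolding is_comp_def
    using set_update_subset_insert[of g k i] by fastforce
  then show ?thesis using False i2 d' k_def by simp
qed

lemma apply_word_comp: "is_comp g \<Longrightarrow> apply_word w g = Some d \<Longrightarrow> is_comp d \<and> length g \<le> length d"
proof (induction w arbitrary: d)
  case Nil then show ?case by simp
next
  case (Cons i w)
  then obtain d1 where d1: "apply_word w g = Some d1" "t_op i d1 = Some d"
    by (cases "apply_word w g") auto
  then show ?case using Cons.IH[OF Cons.prems(1) d1(1)] t_op_SomeD[of d1 i d] by auto
qed

lemma ccover_t_op:
  assumes "ccover g d" "is_comp g"
  shows "\<exists>i. t_op i g = Some d"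
proof -
  from assms(1) consider "d = 1 # g" | k where "k < length g" "d = g[k := g!k + 1]" "\<forall>i<k. g!i \<noteq> g!k"
    unfolding ccover_def by blast
  then show ?thesis
  proof cases
    case 1 then show ?thesis by (intro exI[of _ 1]) (simp add: t_op_def)
  next
    case 2
    have pos: "0 < g!k" using assms(2) 2(1) unfolding is_comp_def by (simp add: nth_mem)
    have inset: "g!k \<in> set g" using 2(1) by (simp add: nth_mem)
    have L: "(LEAST k'. k' < length g \<and> g!k' = g!k) = k"
    proof (rule Least_equality)
      show "k < length g \<and> g!k = g!k" using 2(1) by simp
    next
      fix y assume "y < length g \<and> g!y = g!k"
      then show "k \<le> y" using 2(3) by (meson not_le)
    qed
    have "t_op (g!k + 1) g = Some (g[k := g!k + 1])"
      using pos inset L by (simp add: t_op_def Let_def)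
    then show ?thesis using 2(2) by blast
  qed
qed

lemma cless_apply_word: "cless a b \<Longrightarrow> is_comp a \<Longrightarrow> \<exists>w. w \<noteq> [] \<and> apply_word w a = Some b"
  unfolding cless_def
proof (induction rule: tranclp_induct)
  case (base y)
  then obtain i where "t_op i a = Some y" using ccover_t_op by blast
  then show ?case by (intro exI[of _ "[i]"]) simp
next
  case (step y z)
  then obtain w where w: "w \<noteq> []" "apply_word w a = Some y" by blast
  then have "is_comp y" using apply_word_comp step.prems by blast
  then obtain i where "t_op i y = Some z" using ccover_t_op step.hyps(2) by blast
  then show ?case using w by (intro exI[of _ "i # w"]) simp
qed

lemma heights_zero_iff: "is_comp g \<Longrightarrow> length g \<le> L \<Longrightarrow> r < L \<Longrightarrow> (heights L g r = 0 \<longleftrightarrow> r < L - length g)"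
  unfolding heights_def is_comp_def by (auto simp: nth_mem)

lemma add_box1_heights:
  assumes "is_comp g" "length g < L"
  shows "add_box L 1 (heights L g) = Some (heights L (1 # g))"
proof -
  define y where "y = L - length g - 1"
  have y: "y < L" "heights L g y = 0" using assms heights_zero_iff[OF assms(1)] unfolding y_def by auto
  have G: "\<forall>r<L. heights L g r = 0 \<longrightarrow> r \<le> y" using heights_zero_iff[OF assms(1)] assms unfolding y_def by fastforce
  have "heights L (1 # g) = (heights L g)(y := 1)"
  proof
    fix r show "heights L (1 # g) r = ((heights L g)(y := 1)) r"
      using assms unfolding heights_def y_def by (auto simp: nth_Cons' Suc_diff_Suc)
  qed
  then show ?thesis using add_box_first_col[OF y G] by simp
qed

lemma add_box1_full:
  assumes "is_comp g" "length g = L"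
  shows "add_box L 1 (heights L g) = None"
proof -
  have "\<forall>r<L. heights L g r \<noteq> 0" using heights_zero_iff[OF assms(1), of L] assms by simp
  then show ?thesis by (auto simp: add_box_def)
qed

lemma add_box_heights:
  assumes "is_comp g" "length g \<le> L" "2 \<le> i"
  shows "add_box L i (heights L g) = Option.bind (t_op i g) (\<lambda>d. Some (heights L d))"
proof (cases "(i - 1) \<in> set g")
  case False
  have "\<not> (\<exists>r<L. heights L g r = i - 1)"
  proof
    assume "\<exists>r<L. heights L g r = i - 1"
    then obtain r where r: "r < L" "heights L g r = i - 1" by blast
    then have "L - length g \<le> r" using assms unfolding heights_def by (auto split: if_splits)
    then have "g ! (r - (L - length g)) = i - 1" "r - (L - length g) < length g" using r assms unfolding heights_def by auto
    then show False using False by (metis nth_mem)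
  qed
  moreover have "t_op i g = None" using False assms by (simp add: t_op_def)
  ultimately show ?thesis using assms by (simp add: add_box_def)
next
  case True
  define k where "k = (LEAST k. k < length g \<and> g!k = i - 1)"
  have "\<exists>k. k < length g \<and> g!k = i - 1" using True by (metis in_set_conv_nth)
  then have K: "k < length g \<and> g!k = i - 1" unfolding k_def by (rule LeastI_ex)
  have Kl: "\<And>k'. k' < length g \<Longrightarrow> g!k' = i - 1 \<Longrightarrow> k \<le> k'" unfolding k_def by (auto intro: Least_le)
  have t: "t_op i g = Some (g[k := i])" using True assms K k_def by (simp add: t_op_def Let_def)
  define y where "y = L - length g + k"
  have y: "y < L" "heights L g y = i - 1" using K assms unfolding y_def heights_def by auto
  have G: "\<forall>r<L. heights L g r = i - 1 \<longrightarrow> y \<le> r"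
  proof (intro allI impI)
    fix r assume r: "r < L" "heights L g r = i - 1"
    then have "L - length g \<le> r" using assms unfolding heights_def by (auto split: if_splits)
    then have "g ! (r - (L - length g)) = i - 1" "r - (L - length g) < length g" using r assms unfolding heights_def by auto
    then have "k \<le> r - (L - length g)" using Kl by blast
    then show "y \<le> r" unfolding y_def using \<open>L - length g \<le> r\<close> by simp
  qed
  have "heights L (g[k := i]) = (heights L g)(y := i)"
  proof
    fix r show "heights L (g[k := i]) r = ((heights L g)(y := i)) r"
      using assms K unfolding heights_def y_def by (auto simp: nth_list_update)
  qed
  then show ?thesis using add_box_later_col[OF assms(3) y G] t by simp
qed

lemma add_box0: "add_box L 0 h = None" by (simp add: add_box_def)

lemma apply_word_run:
  "is_comp g \<Longrightarrow> apply_word w g = Some d \<Longrightarrow> length d \<le> L \<Longrightarrow> run_word L w (heights L g) = Some (heights L d)"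
proof (induction w arbitrary: d)
  case Nil then show ?case by simp
next
  case (Cons i w)
  then obtain d1 where d1: "apply_word w g = Some d1" "t_op i d1 = Some d"
    by (cases "apply_word w g") auto
  have cg: "is_comp d1" using apply_word_comp[OF Cons.prems(1) d1(1)] by simp
  note T = t_op_SomeD[OF cg d1(2)]
  have l1: "length d1 \<le> L" using T Cons.prems by simp
  have IH: "run_word L w (heights L g) = Some (heights L d1)" using Cons.IH[OF Cons.prems(1) d1(1) l1] .
  show ?case
  proof (cases "i = 1")
    case True
    then have "length d1 < L" using T Cons.prems by simp
    then show ?thesis using IH add_box1_heights[OF cg] True T by simp
  next
    case False
    then show ?thesis using IH add_box_heights[OF cg l1, of i] T d1 by simp
  qed
qed

lemma run_apply_word:
  "is_comp g \<Longrightarrow> length g \<le> L \<Longrightarrow> run_word L w (heights L g) = Some h \<Longrightarrow>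
   \<exists>d. apply_word w g = Some d \<and> is_comp d \<and> length d \<le> L \<and> h = heights L d"
proof (induction w arbitrary: h)
  case Nil then show ?case by auto
next
  case (Cons i w)
  then obtain h1 where h1: "run_word L w (heights L g) = Some h1" "add_box L i h1 = Some h"
    by (cases "run_word L w (heights L g)") auto
  obtain d1 where d1: "apply_word w g = Some d1" "is_comp d1" "length d1 \<le> L" "h1 = heights L d1"
    using Cons.IH[OF Cons.prems(1,2) h1(1)] by blast
  show ?case
  proof (cases "i = 1")
    case True
    have "length d1 \<noteq> L" using add_box1_full[OF d1(2)] h1 d1 True by auto
    then have "length d1 < L" using d1 by simp
    have t: "t_op 1 d1 = Some (1 # d1)" by (simp add: t_op_def)
    have h: "h = heights L (1 # d1)" using add_box1_heights[OF d1(2) \<open>length d1 < L\<close>] h1 d1 True by simp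
    have c: "is_comp (1 # d1)" using d1(2) by (simp add: is_comp_def)
    show ?thesis
      apply (rule exI[of _ "1 # d1"])
      using t h c d1 True \<open>length d1 < L\<close> by simp
  next
    case False
    have "i \<noteq> 0" using h1 add_box0 by (metis option.distinct(1))
    then have i2: "2 \<le> i" using False by simp
    have e: "add_box L i (heights L d1) = Option.bind (t_op i d1) (\<lambda>d. Some (heights L d))" using add_box_heights[OF d1(2) d1(3) i2] .
    then obtain d where d: "t_op i d1 = Some d" "h = heights L d" using h1 d1 by (cases "t_op i d1") auto
    have "length d = length d1" "is_comp d" using t_op_SomeD[OF d1(2) d(1)] False by auto
    then show ?thesis using d d1 by auto
  qed
qed

lemma heights_inj:
  assumes "is_comp d" "is_comp b" "length d \<le> L" "length b = L" "heights L d = heights L b"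
  shows "d = b"
proof -
  have "length d = L"
  proof (rule ccontr)
    assume "length d \<noteq> L"
    then have "0 < L - length d" using assms by simp
    then have "heights L d 0 = 0" using heights_zero_iff[OF assms(1,3)] by simp
    moreover have "heights L b 0 \<noteq> 0" using heights_zero_iff[OF assms(2)] assms \<open>0 < L - length d\<close> by simp
    ultimately show False using assms by simp
  qed
  moreover have "\<forall>k<L. d!k = b!k"
  proof (intro allI impI)
    fix k assume "k < L"
    have "heights L d k = heights L b k" using assms by simp
    then show "d!k = b!k" using \<open>k < L\<close> \<open>length d = L\<close> assms unfolding heights_def by simp
  qed
  ultimately show ?thesis using assms by (simp add: nth_equalityI)
qed

lemma apply_word_iff_run:
  assumes "is_comp a" "is_comp b" "length a \<le> length b"
  shows "apply_word w a = Some b \<longleftrightarrow> run_word (length b) w (heights (length b) a) = Some (heights (length b) b)"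
proof
  assume "apply_word w a = Some b" then show "run_word (length b) w (heights (length b) a) = Some (heights (length b) b)"
    using apply_word_run[OF assms(1)] by simp
next
  assume "run_word (length b) w (heights (length b) a) = Some (heights (length b) b)"
  then obtain d where "apply_word w a = Some d" "is_comp d" "length d \<le> length b" "heights (length b) b = heights (length b) d"
    using run_apply_word[OF assms(1,3)] by blast
  then show "apply_word w a = Some b" using heights_inj[of d b "length b"] assms by simp
qed

lemma finite_bounded_nat_set[simp]: "finite {r::nat. r<L \<and> P r}"
  by (rule finite_subset[of _ "{..<L}"]) auto

lemma count_shift:
  fixes L y x j :: nat and h g :: "nat \<Rightarrow> nat"
  assumes "y < L" "h y = x - 1" "1 \<le> x" "g y = x"
  shows "card {r. r<L \<and> h r < j \<and> j \<le> g r} = card {r. r<L \<and> (h(y:=x)) r < j \<and> j \<le> g r} + (if j = x then 1 else 0)"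
proof -
  define A where "A = {r. r<L \<and> (h(y:=x)) r < j \<and> j \<le> g r}"
  have yA: "y \<notin> A" using assms unfolding A_def by simp
  have fA: "finite A" unfolding A_def by simp
  show ?thesis
  proof (cases "j = x")
    case True
    then have "{r. r<L \<and> h r < j \<and> j \<le> g r} = insert y A"
      using assms unfolding A_def by (auto split: if_splits)
    then show ?thesis using yA fA True A_def by simp
  next
    case False
    then have "{r. r<L \<and> h r < j \<and> j \<le> g r} = A"
      using assms unfolding A_def by (auto split: if_splits)
    then show ?thesis using False A_def by simp
  qed
qed

(* Invariant describing runs of weakly increasing words u from h to g (their letters are applied
   in decreasing order): every row gains at most one box, the letter counts equal the numbers of
   rows crossing each column, and among rows of length j - 1 those extended to j lie above those
   that stay. *)
definition sweep_inv :: "nat \<Rightarrow> (nat \<Rightarrow> nat) \<Rightarrow> (nat \<Rightarrow> nat) \<Rightarrow> nat list \<Rightarrow> bool" where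
  "sweep_inv L h g u \<longleftrightarrow> (\<forall>r. L \<le> r \<longrightarrow> h r = g r) \<and> (\<forall>r<L. h r \<le> g r \<and> g r \<le> Suc (h r)) \<and>
     (\<forall>j. count_list u j = card {r. r<L \<and> h r < j \<and> j \<le> g r}) \<and>
     (\<forall>j r q. 2 \<le> j \<longrightarrow> r<L \<longrightarrow> q<L \<longrightarrow> h r = j-1 \<longrightarrow> h q = j-1 \<longrightarrow> g r = j \<longrightarrow> g q = j-1 \<longrightarrow> r < q)"

lemma card_pos_ex: "0 < card {r::nat. r<L \<and> P r} \<Longrightarrow> \<exists>r<L. P r"
proof -
  assume "0 < card {r. r<L \<and> P r}"
  then have "{r. r<L \<and> P r} \<noteq> {}" by (metis card.empty less_irrefl)
  then show ?thesis by blast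
qed

lemma card_pos_in: "(y::nat) < L \<Longrightarrow> P y \<Longrightarrow> 0 < card {r. r<L \<and> P r}"
  by (rule card_gt_0_iff[THEN iffD2]) auto

lemma count_pos_in: "0 < count_list u x \<Longrightarrow> x \<in> set u"
  using count_list_0_iff by (metis less_irrefl)

lemma sweep_invD:
  assumes "sweep_inv L h g u"
  shows "\<And>r. L \<le> r \<Longrightarrow> h r = g r" "\<And>r. r<L \<Longrightarrow> h r \<le> g r" "\<And>r. r<L \<Longrightarrow> g r \<le> Suc (h r)"
    "\<And>j. count_list u j = card {r. r<L \<and> h r < j \<and> j \<le> g r}"
    "\<And>j r q. 2 \<le> j \<Longrightarrow> r<L \<Longrightarrow> q<L \<Longrightarrow> h r = j-1 \<Longrightarrow> h q = j-1 \<Longrightarrow> g r = j \<Longrightarrow> g q = j-1 \<Longrightarrow> r < q"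
  using assms unfolding sweep_inv_def by blast+

lemma sweep_inv_snoc:
  assumes inv: "sweep_inv L (h(y := x)) g u"
    and y: "y < L" "h y = x - 1" "1 \<le> x" "g y = x"
    and top: "2 \<le> x \<Longrightarrow> \<forall>r<L. h r = x - 1 \<longrightarrow> y \<le> r"
  shows "sweep_inv L h g (u @ [x])"
proof -
  note S = sweep_invD[OF inv]
  have cs: "\<And>j. card {r. r<L \<and> h r < j \<and> j \<le> g r} = card {r. r<L \<and> (h(y := x)) r < j \<and> j \<le> g r} + (if j = x then 1 else 0)"
    using count_shift[of y L h x g, OF y] by simp
  have A0: "\<forall>r. L \<le> r \<longrightarrow> h r = g r" using S(1) y(1) by (metis fun_upd_other not_le)
  have A1: "\<forall>r<L. h r \<le> g r \<and> g r \<le> Suc (h r)"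
  proof (intro allI impI)
    fix r assume r: "r < L"
    show "h r \<le> g r \<and> g r \<le> Suc (h r)"
    proof (cases "r = y")
      case True then show ?thesis using y by simp
    next
      case False then show ?thesis using S(2,3)[OF r] by simp
    qed
  qed
  have A2: "\<forall>j. count_list (u @ [x]) j = card {r. r < L \<and> h r < j \<and> j \<le> g r}"
    using S(4) cs by simp
  have A3: "\<forall>j r q. 2 \<le> j \<longrightarrow> r<L \<longrightarrow> q<L \<longrightarrow> h r = j-1 \<longrightarrow> h q = j-1 \<longrightarrow> g r = j \<longrightarrow> g q = j-1 \<longrightarrow> r < q"
  proof (intro allI impI)
    fix j r q assume a: "2 \<le> j" "r < L" "q < L" "h r = j - 1" "h q = j - 1" "g r = j" "g q = j - 1"
    show "r < q"
    proof (cases "r = y \<or> q = y")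
      case False
      then show ?thesis using S(5)[of j r q] a by simp
    next
      case True
      then show ?thesis
      proof
        assume "r = y"
        then have "j = x" "q \<noteq> y" using a y by auto
        then show ?thesis using top a \<open>r = y\<close> by fastforce
      next
        assume "q = y"
        then show ?thesis using a y by simp
      qed
    qed
  qed
  show ?thesis unfolding sweep_inv_def using A0 A1 A2 A3 by blast
qed

lemma sweep_inv_of_run:
  "sorted u \<Longrightarrow> run_word L u h = Some g \<Longrightarrow> sweep_inv L h g u"
proof (induction u arbitrary: h rule: rev_induct)
  case Nil
  then show ?case by (auto simp: sweep_inv_def)
next
  case (snoc x u')
  have su: "sorted u'" and le: "\<forall>z\<in>set u'. z \<le> x" using snoc.prems(1) by (auto simp: sorted_append)
  from snoc.prems(2) obtain h1 where h1: "add_box L x h = Some h1" "run_word L u' h1 = Some g"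
    by (cases "add_box L x h") (auto simp: run_word_append)
  from add_box_SomeD[OF h1(1)] obtain y where y: "y<L" "h y = x - 1" "1 \<le> x" "h1 = h(y := x)"
    "2 \<le> x \<longrightarrow> (\<forall>r<L. h r = x-1 \<longrightarrow> y \<le> r)" by blast
  have IH: "sweep_inv L h1 g u'" using snoc.IH[OF su h1(2)] .
  note S = sweep_invD[OF IH]
  have "g y = x"
  proof (rule ccontr)
    assume "g y \<noteq> x"
    then have "g y = Suc x" using S(2,3)[OF y(1)] y by simp
    then have "0 < card {r. r<L \<and> h1 r < Suc x \<and> Suc x \<le> g r}"
      using card_pos_in[of y L "\<lambda>r. h1 r < Suc x \<and> Suc x \<le> g r"] y by simp
    then have "Suc x \<in> set u'" using S(4) count_pos_in by metis
    then show False using le by auto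
  qed
  then show ?case using sweep_inv_snoc[of L h y x g u'] IH y by blast
qed

lemma sweep_inv_last_box:
  assumes inv: "sweep_inv L h g (u @ [x])" and gpos: "\<forall>r<L. 1 \<le> g r"
  obtains y where "y < L" "h y = x - 1" "g y = x" "1 \<le> x" "add_box L x h = Some (h(y := x))"
proof -
  note S = sweep_invD[OF inv]
  have "0 < card {r. r<L \<and> h r < x \<and> x \<le> g r}" using S(4)[of x] by simp
  then obtain r0 where r0: "r0 < L" "h r0 < x" "x \<le> g r0"
    using card_pos_ex[of L "\<lambda>r. h r < x \<and> x \<le> g r"] by blast
  have r0': "h r0 = x - 1" "g r0 = x" "1 \<le> x" using r0 S(3)[OF r0(1)] by auto
  show ?thesis
  proof (cases "x = 1")
    case True
    define y where "y = (GREATEST r. r<L \<and> h r = 0)"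
    have P: "y < L \<and> h y = 0" unfolding y_def
      by (rule GreatestI_nat[of _ r0 L]) (use r0 r0' True in auto)
    have G: "\<forall>r<L. h r = 0 \<longrightarrow> r \<le> y" unfolding y_def
      by (auto intro: Greatest_le_nat[of _ _ L])
    have "1 \<le> g y" using P gpos by blast
    moreover have "g y \<le> 1" using P S(3)[of y] by simp
    ultimately have "g y = 1" by simp
    then show ?thesis using that[of y] P add_box_first_col[OF _ _ G] True by auto
  next
    case False
    define y where "y = (LEAST r. r<L \<and> h r = x - 1)"
    have P: "y < L \<and> h y = x - 1" unfolding y_def by (rule LeastI) (use r0 r0' in auto)
    have G: "\<forall>r<L. h r = x - 1 \<longrightarrow> y \<le> r" unfolding y_def by (auto intro: Least_le)
    have "g y = x"
    proof (rule ccontr)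
      assume "g y \<noteq> x"
      moreover have "h y \<le> g y" "g y \<le> Suc (h y)" using S(2)[of y] S(3)[of y] P by auto
      ultimately have "g y = x - 1" using P r0' by auto
      then have "r0 < y" using S(5)[of x r0 y] False r0 r0' P by auto
      then show False using G r0 r0' by fastforce
    qed
    then show ?thesis using that[of y] P add_box_later_col[OF _ _ _ G] False r0' by auto
  qed
qed

lemma sweep_inv_butlast:
  assumes inv: "sweep_inv L h g (u @ [x])" and le: "\<forall>z\<in>set u. z \<le> x"
    and y: "y < L" "h y = x - 1" "1 \<le> x" "g y = x"
  shows "sweep_inv L (h(y := x)) g u"
proof -
  note S = sweep_invD[OF inv]
  define h1 where "h1 = h(y := x)"
  have cs: "\<And>j. card {r. r<L \<and> h r < j \<and> j \<le> g r} = card {r. r<L \<and> h1 r < j \<and> j \<le> g r} + (if j = x then 1 else 0)"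
    using count_shift[of y L h x g, OF y] h1_def by simp
  have nx: "\<And>r. r < L \<Longrightarrow> h r = x \<Longrightarrow> g r = Suc x \<Longrightarrow> False"
  proof -
    fix r assume a: "r < L" "h r = x" "g r = Suc x"
    then have "0 < card {r. r<L \<and> h r < Suc x \<and> Suc x \<le> g r}"
      using card_pos_in[of r L "\<lambda>r. h r < Suc x \<and> Suc x \<le> g r"] by simp
    then have "Suc x \<in> set (u @ [x])" using S(4) count_pos_in by metis
    then show False using le by auto
  qed
  have A0: "\<forall>r. L \<le> r \<longrightarrow> h1 r = g r" using S(1) y h1_def by auto
  have A1: "\<forall>r<L. h1 r \<le> g r \<and> g r \<le> Suc (h1 r)"
  proof (intro allI impI)
    fix r assume r: "r < L"
    show "h1 r \<le> g r \<and> g r \<le> Suc (h1 r)"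
    proof (cases "r = y")
      case True then show ?thesis using y h1_def by simp
    next
      case False then have "h1 r = h r" using h1_def by simp
      then show ?thesis using S(2,3) r by metis
    qed
  qed
  have A2: "\<forall>j. count_list u j = card {r. r < L \<and> h1 r < j \<and> j \<le> g r}"
  proof
    fix j
    have "count_list (u @ [x]) j = count_list u j + (if j = x then 1 else 0)" by auto
    then show "count_list u j = card {r. r < L \<and> h1 r < j \<and> j \<le> g r}" using S(4)[of j] cs[of j] by linarith
  qed
  have A3: "\<forall>j r q. 2 \<le> j \<longrightarrow> r<L \<longrightarrow> q<L \<longrightarrow> h1 r = j-1 \<longrightarrow> h1 q = j-1 \<longrightarrow> g r = j \<longrightarrow> g q = j-1 \<longrightarrow> r < q"
  proof (intro allI impI)
    fix j r q assume a: "2 \<le> j" "r < L" "q < L" "h1 r = j - 1" "h1 q = j - 1" "g r = j" "g q = j - 1"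
    show "r < q"
    proof (cases "r = y \<or> q = y")
      case False
      then show ?thesis using S(5)[of j r q] a h1_def by simp
    next
      case True
      then show ?thesis
      proof
        assume "r = y" then show ?thesis using a y h1_def by simp
      next
        assume "q = y"
        then have "j - 1 = x" using a h1_def by simp
        moreover have "r \<noteq> y" using a \<open>q = y\<close> y h1_def by auto
        ultimately show ?thesis using nx[of r] a h1_def by auto
      qed
    qed
  qed
  show ?thesis unfolding sweep_inv_def h1_def[symmetric] using A0 A1 A2 A3 by blast
qed

lemma run_of_sweep_inv:
  "sorted u \<Longrightarrow> \<forall>r<L. 1 \<le> g r \<Longrightarrow> sweep_inv L h g u \<Longrightarrow> run_word L u h = Some g"
proof (induction u arbitrary: h rule: rev_induct)
  case Nil
  note S = sweep_invD[OF Nil(3)]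
  have "h r = g r" for r
  proof (cases "r < L")
    case True
    have "card {q. q<L \<and> h q < g r \<and> g r \<le> g q} = 0" using S(4)[of "g r"] by simp
    then have "\<not> h r < g r" using True card_pos_in[of r L "\<lambda>q. h q < g r \<and> g r \<le> g q"] by auto
    then show ?thesis using S(2)[OF True] by simp
  next
    case False then show ?thesis using S(1) by simp
  qed
  then show ?case by (simp add: fun_eq_iff)
next
  case (snoc x u')
  have su: "sorted u'" and le: "\<forall>z\<in>set u'. z \<le> x" using snoc.prems(1) by (auto simp: sorted_append)
  obtain y where y: "y < L" "h y = x - 1" "g y = x" "1 \<le> x" "add_box L x h = Some (h(y := x))"
    using sweep_inv_last_box[OF snoc.prems(3,2)] by blast
  have "sweep_inv L (h(y := x)) g u'" using sweep_inv_butlast[OF snoc.prems(3) le y(1,2,4,3)] .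
  then have "run_word L u' (h(y := x)) = Some g" using snoc.IH[OF su snoc.prems(2)] by blast
  then show ?case using y(5) by (simp add: run_word_append)
qed

lemma split_desc:
  assumes "sorted_wrt (>) w" "k \<in> set w"
  shows "\<exists>hi lo. w = hi @ k # lo \<and> (\<forall>x\<in>set hi. k < x) \<and> (\<forall>x\<in>set lo. x < k)"
proof -
  obtain hi lo where w: "w = hi @ k # lo" using split_list[OF assms(2)] by blast
  have "sorted_wrt (>) (hi @ k # lo)" using assms(1) w by simp
  then have "(\<forall>x\<in>set hi. k < x) \<and> (\<forall>x\<in>set lo. x < k)" by (simp add: sorted_wrt_append)
  moreover note w
  ultimately show ?thesis by blast
qed

lemma card_1_eq: "card A = 1 \<Longrightarrow> x \<in> A \<Longrightarrow> y \<in> A \<Longrightarrow> x = y"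
  by (erule card_1_singletonE) simp

lemma run_word_ord:
  assumes w: "sorted_wrt (>) w" and p: "run_word L w h0 = Some h1" and k: "k \<in> set w" "2 \<le> k"
    and x: "x < L" "h0 x < k" "k \<le> h1 x"
    and u: "u < L" "u \<noteq> x" "h0 u \<le> k - 1" "h1 u = k - 1"
  shows "x < u"
proof -
  obtain hi lo where s: "w = hi @ k # lo" "\<forall>z\<in>set hi. k < z" "\<forall>z\<in>set lo. z < k"
    using split_desc[OF w k(1)] by blast
  obtain hA where hA: "run_word L lo h0 = Some hA"
    using p s(1) by (cases "run_word L lo h0") (auto simp: run_word_append)
  obtain hB where hB: "add_box L k hA = Some hB"
    using p s(1) hA by (cases "add_box L k hA") (auto simp: run_word_append)
  have hC: "run_word L hi hB = Some h1" using p s(1) hA hB by (simp add: run_word_append)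
  from add_box_SomeD[OF hB] obtain y where y: "y<L" "hA y = k - 1" "hB = hA(y := k)"
    "(2 \<le> k \<longrightarrow> (\<forall>r<L. hA r = k-1 \<longrightarrow> y \<le> r))" by blast
  have mB: "hB u \<le> h1 u" using run_word_mono[OF hC] by blast
  have "hB u < k" using mB u k by simp
  then have "h1 u = hB u" using run_word_high[OF hC s(2)] by blast
  then have Bu: "hB u = k - 1" using u by simp
  then have uy: "u \<noteq> y" using y k by auto
  then have Au: "hA u = k - 1" using Bu y by simp
  then have yu: "y \<le> u" using y u k by simp
  have "k \<notin> set hi" "k \<notin> set lo" using s by auto
  then have "count_list w k = 1" using s(1) by simp
  then have c1: "card {r. r < L \<and> h0 r < k \<and> k \<le> h1 r} = 1" using run_word_count[OF p] by simp
  have "h0 y \<le> hA y" using run_word_mono[OF hA] by blast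
  moreover have "hB y \<le> h1 y" using run_word_mono[OF hC] by blast
  ultimately have "y \<in> {r. r < L \<and> h0 r < k \<and> k \<le> h1 r}" using y k by auto
  moreover have "x \<in> {r. r < L \<and> h0 r < k \<and> k \<le> h1 r}" using x by auto
  ultimately have "x = y" using card_1_eq[OF c1] by blast
  then show ?thesis using yu uy by simp
qed

lemma count_rep[simp]: "count_list (replicate n y) j = (if y = j then n else 0)"
  by (induction n) auto

lemma sorted_concat_rep: "sorted (concat (map (\<lambda>j. replicate (f j) j) [x..<y]))"
proof (induction y)
  case 0 then show ?case by simp
next
  case (Suc y)
  show ?case
  proof (cases "x \<le> y")
    case True
    then have "[x..<Suc y] = [x..<y] @ [y]" by simp
    then show ?thesis using Suc by (auto simp: sorted_append)
  next
    case False then show ?thesis by simp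
  qed
qed

lemma count_concat_rep: "count_list (concat (map (\<lambda>j. replicate (f j) j) [1..<y])) j = (if 1 \<le> j \<and> j < y then f j else 0)"
proof (induction y)
  case 0 then show ?case by simp
next
  case (Suc y)
  show ?case
  proof (cases "1 \<le> y")
    case True
    then have "[1..<Suc y] = [1..<y] @ [y]" by simp
    then show ?thesis using Suc by auto
  next
    case False then show ?thesis by auto
  qed
qed

lemma count_distinct: "distinct xs \<Longrightarrow> x \<in> set xs \<Longrightarrow> count_list xs x = 1"
  by (induction xs) (auto simp: count_list_0_iff)

lemma card_split:
  fixes L j :: nat and p h g :: "nat \<Rightarrow> nat"
  assumes "\<And>r. r < L \<Longrightarrow> p r \<le> h r \<and> h r \<le> g r"
  shows "card {r. r<L \<and> p r < j \<and> j \<le> g r} = card {r. r<L \<and> p r < j \<and> j \<le> h r} + card {r. r<L \<and> h r < j \<and> j \<le> g r}"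
proof -
  have "{r. r<L \<and> p r < j \<and> j \<le> g r} = {r. r<L \<and> p r < j \<and> j \<le> h r} \<union> {r. r<L \<and> h r < j \<and> j \<le> g r}"
    using assms by (auto intro: le_trans) (meson le_less_trans not_le)
  moreover have "{r. r<L \<and> p r < j \<and> j \<le> h r} \<inter> {r. r<L \<and> h r < j \<and> j \<le> g r} = {}" by auto
  ultimately show ?thesis by (simp add: card_Un_disjoint)
qed

lemma reverse_hookwordI:
  assumes "sorted u" "u \<noteq> []" "sorted_wrt (>) v" "\<forall>x\<in>set v. x < last u"
  shows "reverse_hookword (u @ v)"
  unfolding reverse_hookword_def
proof (intro exI[of _ "length u - 1"] conjI allI impI)
  show "length u - 1 < length (u @ v)" using assms(2) by (cases u) auto
next
  fix q assume q: "q < length u - 1"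
  then have "Suc q < length u" by simp
  then show "(u @ v) ! q \<le> (u @ v) ! (q + 1)"
    using sorted_nth_mono[OF assms(1), of q "q+1"] by (simp add: nth_append)
next
  fix q assume q: "length u - 1 \<le> q \<and> q + 1 < length (u @ v)"
  show "(u @ v) ! (q + 1) < (u @ v) ! q"
  proof (cases "q = length u - 1")
    case True
    then have e1: "(u @ v) ! q = last u" using assms(2) by (simp add: nth_append last_conv_nth)
    have "(u @ v) ! (q + 1) = v ! 0" using True assms(2) by (simp add: nth_append)
    moreover have "v \<noteq> []" using q True assms(2) by auto
    ultimately show ?thesis using e1 assms(4) by simp
  next
    case False
    moreover have "0 < length u" using assms(2) by simp
    ultimately have "length u \<le> q" using q by linarith
    then have "(u @ v) ! q = v ! (q - length u)" "(u @ v) ! (q + 1) = v ! (q + 1 - length u)"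
      by (simp_all add: nth_append)
    moreover have "v ! (q - length u) > v ! (q + 1 - length u)"
    proof -
      have "q - length u < q + 1 - length u" "q + 1 - length u < length v" using q \<open>length u \<le> q\<close> by auto
      then show ?thesis using sorted_wrt_nth_less[OF assms(3), of "q - length u" "q + 1 - length u"] by blast
    qed
    ultimately show ?thesis by simp
  qed
qed

lemma reverse_hookwordE:
  assumes "reverse_hookword w"
  shows "\<exists>u v. w = u @ v \<and> sorted u \<and> u \<noteq> [] \<and> sorted_wrt (>) v \<and> (\<forall>x\<in>set v. x < last u)"
proof -
  obtain k where k: "k < length w" "\<forall>q. q < k \<longrightarrow> w!q \<le> w!(q+1)"
    "\<forall>q. k \<le> q \<and> q + 1 < length w \<longrightarrow> w!q > w!(q+1)"
    using assms unfolding reverse_hookword_def by blast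
  define u where "u = take (Suc k) w"
  define v where "v = drop (Suc k) w"
  have lu: "length u = Suc k" using k(1) unfolding u_def by simp
  have su: "sorted u" unfolding sorted_iff_nth_Suc
  proof (intro allI impI)
    fix i assume "Suc i < length u"
    then show "u ! i \<le> u ! Suc i" using k(2) lu unfolding u_def by simp
  qed
  have sv: "sorted_wrt (>) v" unfolding sorted_wrt_iff_nth_Suc_transp[of "(>)", OF transp_on_greater]
  proof (intro allI impI)
    fix i assume "Suc i < length v"
    then show "v ! i > v ! Suc i" using k(3)[rule_format, of "Suc k + i"] unfolding v_def by simp
  qed
  have lst: "last u = w ! k"
  proof -
    have "u \<noteq> []" using lu by auto
    then have "last u = u ! (length u - 1)" by (simp add: last_conv_nth)
    also have "\<dots> = w ! k" using lu unfolding u_def by simp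
    finally show ?thesis .
  qed
  have lt: "\<forall>x\<in>set v. x < last u"
  proof
    fix x assume "x \<in> set v"
    then obtain i where i: "i < length v" "v ! i = x" by (metis in_set_conv_nth)
    have "v ! 0 < w ! k" using k(3)[rule_format, of k] i unfolding v_def by simp
    moreover have "v ! i \<le> v ! 0"
    proof (cases "i = 0")
      case False then show ?thesis using sorted_wrt_nth_less[OF sv, of 0 i] i by simp
    qed simp
    ultimately show "x < last u" using i lst by simp
  qed
  have "w = u @ v" unfolding u_def v_def by simp
  then show ?thesis using su sv lt lu by (intro exI[of _ u] exI[of _ v]) auto
qed

(* The setting of the counting argument: height functions p <= g on L rows such that
   - rows outside the range are empty, all rows of g are nonempty, the empty rows of p are the
     top ones (p, g are the heights of alpha, beta);
   - the "frozen" property of run_word_frozen holds;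
   - N1 and N2 are the nc border strip conditions, read row by row;
   - the columns of the skew shape are exactly those in {a..b}. *)
locale strip =
  fixes L :: nat and p g :: "nat \<Rightarrow> nat" and a b :: nat
  assumes out: "\<And>r. L \<le> r \<Longrightarrow> p r = 0 \<and> g r = 0"
    and gpos: "\<And>r. r < L \<Longrightarrow> 1 \<le> g r"
    and pg: "\<And>r. p r \<le> g r"
    and prefix: "\<And>r r'. r' \<le> r \<Longrightarrow> r < L \<Longrightarrow> p r = 0 \<Longrightarrow> p r' = 0"
    and frozen: "\<And>u r v. u<L \<Longrightarrow> r<L \<Longrightarrow> 1 \<le> v \<Longrightarrow> p u = v \<Longrightarrow> g u = v \<Longrightarrow> p r \<le> v \<Longrightarrow> v < g r \<Longrightarrow> r < u"
    and N1: "\<And>r r'. r < L \<Longrightarrow> p r < 1 \<Longrightarrow> 2 \<le> g r \<Longrightarrow> r' < L \<Longrightarrow> p r' < 1 \<Longrightarrow> r' \<le> r"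
    and N2: "\<And>j r r'. 2 \<le> j \<Longrightarrow> r < L \<Longrightarrow> p r < j \<Longrightarrow> Suc j \<le> g r \<Longrightarrow> r' < L \<Longrightarrow> p r' < j \<Longrightarrow> j \<le> g r' \<Longrightarrow> r \<le> r'"
    and a1: "1 \<le> a" and ab: "a \<le> b"
    and supp: "\<And>j. (\<exists>r<L. p r < j \<and> j \<le> g r) \<longleftrightarrow> a \<le> j \<and> j \<le> b"
begin

definition col_rows :: "nat \<Rightarrow> nat set" where "col_rows j = {r. r < L \<and> p r < j \<and> j \<le> g r}"
definition col_size :: "nat \<Rightarrow> nat" where "col_size j = card (col_rows j)"

definition spans :: "nat \<Rightarrow> bool" where "spans j \<longleftrightarrow> (\<exists>r. r \<in> col_rows j \<and> r \<in> col_rows (Suc j))"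
definition ne_col :: "nat \<Rightarrow> bool" where
  "ne_col j \<longleftrightarrow> col_rows j \<noteq> {} \<and> col_rows (Suc j) \<noteq> {} \<and> (\<forall>r1\<in>col_rows (Suc j). \<forall>r2\<in>col_rows j. r1 < r2)"

(* The candidates for the set of letters of the decreasing part. *)
definition admissible :: "nat set \<Rightarrow> bool" where
  "admissible D \<longleftrightarrow> D \<subseteq> {a..<b} \<and> (\<forall>j. spans j \<longrightarrow> j \<in> D) \<and> (\<forall>j\<in>D. spans j \<or> ne_col j)"

definition desc_part :: "nat set \<Rightarrow> nat list" where "desc_part D = filter (\<lambda>d. d \<in> D) (rev [1..<b])"
definition asc_part :: "nat set \<Rightarrow> nat list" where
  "asc_part D = concat (map (\<lambda>j. replicate (col_size j - (if j \<in> D then 1 else 0)) j) [1..<Suc b])"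
definition hook_word :: "nat set \<Rightarrow> nat list" where "hook_word D = asc_part D @ desc_part D"

lemma col_rows_nonempty: "col_rows j \<noteq> {} \<longleftrightarrow> a \<le> j \<and> j \<le> b"
  using supp[of j] unfolding col_rows_def by auto

lemma col_size_pos: "0 < col_size j \<longleftrightarrow> a \<le> j \<and> j \<le> b"
  unfolding col_size_def using col_rows_nonempty[of j] by (simp add: card_gt_0_iff col_rows_def)

lemma spans_range: "spans j \<Longrightarrow> a \<le> j \<and> j < b"
proof -
  assume "spans j"
  then have "col_rows j \<noteq> {}" "col_rows (Suc j) \<noteq> {}" unfolding spans_def by auto
  then show ?thesis using col_rows_nonempty by auto
qed

lemma sorted_asc_part: "sorted (asc_part D)"
  unfolding asc_part_def by (rule sorted_concat_rep)

lemma count_asc_part: "count_list (asc_part D) j = (if 1 \<le> j \<and> j \<le> b then col_size j - (if j \<in> D then 1 else 0) else 0)"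
  unfolding asc_part_def count_concat_rep by (simp add: less_Suc_eq_le)

lemma desc_part_decreasing: "sorted_wrt (>) (desc_part D)"
  unfolding desc_part_def by (rule sorted_wrt_filter) (simp add: sorted_wrt_rev sorted_upt)

lemma count_desc_part: "count_list (desc_part D) j = (if j \<in> D \<and> 1 \<le> j \<and> j < b then 1 else 0)"
proof -
  have "distinct (desc_part D)" unfolding desc_part_def by simp
  moreover have "set (desc_part D) = {j. j \<in> D \<and> 1 \<le> j \<and> j < b}" unfolding desc_part_def by auto
  ultimately show ?thesis by (auto simp: count_list_0_iff count_distinct)
qed

(* The row that receives the box in column j when the letter j is applied during the decreasing
   part: the bottommost row of column 1, the topmost row of column j >= 2. *)
definition col_rep :: "nat \<Rightarrow> nat" where
  "col_rep j = (if j = 1 then (GREATEST r. r \<in> col_rows 1) else (LEAST r. r \<in> col_rows j))"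

lemma finite_col_rows: "finite (col_rows j)" unfolding col_rows_def by simp

lemma col_rep_props:
  assumes "col_rows j \<noteq> {}"
  shows "col_rep j \<in> col_rows j" "j = 1 \<Longrightarrow> r \<in> col_rows 1 \<Longrightarrow> r \<le> col_rep 1" "j \<noteq> 1 \<Longrightarrow> r \<in> col_rows j \<Longrightarrow> col_rep j \<le> r"
proof -
  obtain r0 where r0: "r0 \<in> col_rows j" using assms by blast
  have bnd: "\<And>y. y \<in> col_rows k \<Longrightarrow> y \<le> L" for k unfolding col_rows_def by simp
  show "col_rep j \<in> col_rows j"
  proof (cases "j = 1")
    case True
    then show ?thesis unfolding col_rep_def using GreatestI_nat[of "\<lambda>r. r \<in> col_rows 1" r0 L] r0 bnd by auto
  next
    case False
    then show ?thesis unfolding col_rep_def using LeastI[of "\<lambda>r. r \<in> col_rows j" r0] r0 by auto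
  qed
  show "j = 1 \<Longrightarrow> r \<in> col_rows 1 \<Longrightarrow> r \<le> col_rep 1"
    unfolding col_rep_def using Greatest_le_nat[of "\<lambda>r. r \<in> col_rows 1" r L] bnd by auto
  show "j \<noteq> 1 \<Longrightarrow> r \<in> col_rows j \<Longrightarrow> col_rep j \<le> r"
    unfolding col_rep_def by (auto intro: Least_le)
qed

lemma col_rep_spanning:
  assumes "r \<in> col_rows j" "r \<in> col_rows (Suc j)"
  shows "col_rep j = r"
proof (cases "j = 1")
  case True
  have "\<And>r'. r' \<in> col_rows 1 \<Longrightarrow> r' \<le> r" using N1[of r] assms True unfolding col_rows_def by auto
  moreover have "col_rep 1 \<in> col_rows 1" "r \<le> col_rep 1" using col_rep_props[of 1] assms True by auto
  ultimately show ?thesis using True by (meson antisym)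
next
  case False
  have j2: "2 \<le> j" using False assms unfolding col_rows_def by auto
  have "\<And>r'. r' \<in> col_rows j \<Longrightarrow> r \<le> r'" using N2[OF j2, of r] assms unfolding col_rows_def by auto
  moreover have "col_rep j \<in> col_rows j" "col_rep j \<le> r" using col_rep_props[of j] assms False by auto
  ultimately show ?thesis by (meson antisym)
qed

lemma admissibleD:
  assumes "admissible D"
  shows "D \<subseteq> {a..<b}" "\<And>j. spans j \<Longrightarrow> j \<in> D" "\<And>j. j \<in> D \<Longrightarrow> spans j \<or> ne_col j"
  using assms unfolding admissible_def by blast+

lemma col_rep_below:
  assumes "admissible D" "i \<in> D" "g (col_rep i) = i" "r \<in> col_rows (Suc i)"
  shows "r < col_rep i"
proof -
  have "a \<le> i" "i < b" using admissibleD(1)[OF assms(1)] assms(2) by auto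
  then have "col_rows i \<noteq> {}" using col_rows_nonempty by simp
  then have q: "col_rep i \<in> col_rows i" using col_rep_props by blast
  from admissibleD(3)[OF assms(1,2)] show ?thesis
  proof
    assume "spans i"
    then obtain \<rho> where "\<rho> \<in> col_rows i" "\<rho> \<in> col_rows (Suc i)" unfolding spans_def by blast
    then have "col_rep i = \<rho>" using col_rep_spanning by blast
    then show ?thesis using assms(3) \<open>\<rho> \<in> col_rows (Suc i)\<close> unfolding col_rows_def by simp
  next
    assume "ne_col i"
    then show ?thesis using q assms(4) unfolding ne_col_def by blast
  qed
qed

(* The height function reached from p after applying the letters of D smaller than j in
   increasing order: every row is filled up to column j - 1, but stays at least one box short
   of its final length; a row whose final length g r < j is a letter of D additionally has its
   last box if it is the representative of column g r. *)
definition desc_state :: "nat set \<Rightarrow> nat \<Rightarrow> nat \<Rightarrow> nat" where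
  "desc_state D j r = (if r < L then max (p r) (min (g r - 1) (j - 1)) +
      (if g r < j \<and> g r \<in> D \<and> col_rep (g r) = r \<and> p r < g r then 1 else 0) else 0)"

lemma desc_state_1: "desc_state D 1 = p"
proof
  fix r show "desc_state D 1 r = p r"
  proof (cases "r < L")
    case True then show ?thesis using gpos[OF True] unfolding desc_state_def by simp
  next
    case False then show ?thesis using out[of r] unfolding desc_state_def by simp
  qed
qed

(* Skipping a letter j not in D does not change the state (no row spans column j). *)
lemma desc_state_skip:
  assumes "admissible D" "j \<notin> D"
  shows "desc_state D (Suc j) = desc_state D j"
proof
  fix r show "desc_state D (Suc j) r = desc_state D j r"
  proof (cases "r < L")
    case True
    have ns: "\<not> (Suc j \<le> g r \<and> p r < j)"
    proof
      assume "Suc j \<le> g r \<and> p r < j"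
      then have "spans j" unfolding spans_def col_rows_def using True by auto
      then show False using admissibleD(2)[OF assms(1)] assms(2) by blast
    qed
    have e: "(g r < Suc j \<and> g r \<in> D \<and> col_rep (g r) = r \<and> p r < g r) = (g r < j \<and> g r \<in> D \<and> col_rep (g r) = r \<and> p r < g r)"
      using assms(2) by (cases "g r = j") auto
    have m: "max (p r) (min (g r - 1) (Suc j - 1)) = max (p r) (min (g r - 1) (j - 1))"
      using ns by (cases "p r < j"; cases "Suc j \<le> g r") (auto simp: max_def min_def)
    show ?thesis using True e m unfolding desc_state_def by presburger
  next
    case False then show ?thesis unfolding desc_state_def by simp
  qed
qed

lemma desc_state_upd:
  assumes "admissible D" "j \<in> D"
  shows "desc_state D (Suc j) = (desc_state D j)(col_rep j := j)"
proof -
  have "a \<le> j" "j < b" using admissibleD(1)[OF assms(1)] assms(2) by auto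
  then have "col_rows j \<noteq> {}" using col_rows_nonempty by simp
  then have y: "col_rep j \<in> col_rows j" using col_rep_props by blast
  show ?thesis
  proof
    fix r show "desc_state D (Suc j) r = ((desc_state D j)(col_rep j := j)) r"
    proof (cases "r = col_rep j")
      case True
      have yL: "r < L" "p r < j" "j \<le> g r" using y True unfolding col_rows_def by auto
      show ?thesis
      proof (cases "Suc j \<le> g r")
        case True
        then show ?thesis using yL \<open>r = col_rep j\<close> unfolding desc_state_def by simp
      next
        case False
        then have "g r = j" using yL by simp
        then show ?thesis using yL \<open>r = col_rep j\<close> assms(2) unfolding desc_state_def by simp
      qed
    next
      case False
      show ?thesis
      proof (cases "r < L")
        case True
        have ns: "\<not> (Suc j \<le> g r \<and> p r < j)"
        proof
          assume "Suc j \<le> g r \<and> p r < j"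
          then have "r \<in> col_rows j" "r \<in> col_rows (Suc j)" unfolding col_rows_def using True by auto
          then show False using col_rep_spanning False by metis
        qed
        have e: "(g r < Suc j \<and> g r \<in> D \<and> col_rep (g r) = r \<and> p r < g r) = (g r < j \<and> g r \<in> D \<and> col_rep (g r) = r \<and> p r < g r)"
          using False by (cases "g r = j") auto
        have m: "max (p r) (min (g r - 1) (Suc j - 1)) = max (p r) (min (g r - 1) (j - 1))"
          using ns by (cases "p r < j"; cases "Suc j \<le> g r") (auto simp: max_def min_def)
        show ?thesis using True e m False unfolding desc_state_def by simp
      next
        case False then show ?thesis using \<open>r \<noteq> col_rep j\<close> unfolding desc_state_def by simp
      qed
    qed
  qed
qed

lemma desc_state_full:
  assumes "r < L" "desc_state D j r = g r" "g r < j"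
  shows "(p r = g r) \<or> (p r < g r \<and> g r \<in> D \<and> col_rep (g r) = r)"
proof (cases "p r = g r")
  case True then show ?thesis by simp
next
  case False
  then have lt: "p r < g r" using pg[of r] by simp
  then have "max (p r) (min (g r - 1) (j - 1)) = g r - 1" using assms(3) by (auto simp: max_def min_def)
  then have "desc_state D j r = g r - 1 + (if g r < j \<and> g r \<in> D \<and> col_rep (g r) = r \<and> p r < g r then 1 else 0)"
    using assms(1) unfolding desc_state_def by simp
  then have "(g r < j \<and> g r \<in> D \<and> col_rep (g r) = r \<and> p r < g r)" using assms(2) gpos[OF assms(1)]
    by (cases "g r < j \<and> g r \<in> D \<and> col_rep (g r) = r \<and> p r < g r") auto
  then show ?thesis using lt by simp
qed

lemma desc_state_topmost:
  assumes "admissible D" "j \<in> D" "2 \<le> j"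
  shows "\<forall>r<L. desc_state D j r = j - 1 \<longrightarrow> col_rep j \<le> r"
proof -
  have "a \<le> j" "j < b" using admissibleD(1)[OF assms(1)] assms(2) by auto
  then have "col_rows j \<noteq> {}" using col_rows_nonempty by simp
  then have y: "col_rep j \<in> col_rows j" using col_rep_props by blast
  have j_ne_1: "j \<noteq> 1" and j2: "2 \<le> j" using assms(3) by auto
  have yL: "col_rep j < L" "p (col_rep j) < j" "j \<le> g (col_rep j)" using y unfolding col_rows_def by auto
  show ?thesis
  proof (intro allI impI)
    fix r assume r: "r < L" "desc_state D j r = j - 1"
    show "col_rep j \<le> r"
    proof (cases "j \<le> g r")
      case True
      have "min (g r - 1) (j - 1) = j - 1" using True by simp
      then have "desc_state D j r = max (p r) (j - 1)" using r(1) True unfolding desc_state_def by simp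
      then have "p r < j" using r j2 by simp
      then have "r \<in> col_rows j" using r True unfolding col_rows_def by simp
      then show ?thesis using col_rep_props(3)[of j r] j_ne_1 \<open>col_rows j \<noteq> {}\<close> by simp
    next
      case gl: False
      have "desc_state D j r \<le> g r"
      proof -
        have "max (p r) (min (g r - 1) (j - 1)) \<le> g r" using pg[of r] by simp
        moreover have "max (p r) (min (g r - 1) (j - 1)) \<le> g r - 1 \<or> p r = g r"
          using pg[of r] by (auto simp: max_def min_def)
        ultimately show ?thesis unfolding desc_state_def using r(1) by auto
      qed
      have "g r = j - 1 \<or> desc_state D j r < g r" using \<open>desc_state D j r \<le> g r\<close> r gl by linarith
      show ?thesis
      proof (cases "g r = j - 1")
        case True
        then have "desc_state D j r = g r" using r by simp
        have "g r < j" using gl by simp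
        from desc_state_full[OF r(1) \<open>desc_state D j r = g r\<close> this]
        show ?thesis
        proof (elim disjE)
          assume "p r = g r"
          then have "col_rep j < r" using frozen[of r "col_rep j" "j - 1"] r yL True j2 by simp
          then show ?thesis by simp
        next
          assume a: "p r < g r \<and> g r \<in> D \<and> col_rep (g r) = r"
          have "Suc (j - 1) = j" using j2 by simp
          then have "col_rep j \<in> col_rows (Suc (j - 1))" using y by simp
          then have "col_rep j < col_rep (j - 1)" using col_rep_below[OF assms(1), of "j - 1" "col_rep j"] a True by simp
          then show ?thesis using a True by simp
        qed
      next
        case False
        then have "desc_state D j r < g r" using \<open>g r = j - 1 \<or> desc_state D j r < g r\<close> by simp
        then show ?thesis using r gl by simp
      qed
    qed
  qed
qed

lemma desc_state_step:
  assumes "admissible D" "j \<in> D"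
  shows "add_box L j (desc_state D j) = Some (desc_state D (Suc j))"
proof -
  have ab': "a \<le> j" "j < b" using admissibleD(1)[OF assms(1)] assms(2) by auto
  then have "col_rows j \<noteq> {}" using col_rows_nonempty by simp
  then have y: "col_rep j \<in> col_rows j" using col_rep_props by blast
  have j1: "1 \<le> j" using ab' a1 by simp
  show ?thesis
  proof (cases "j = 1")
    case True
    have yz: "col_rep 1 < L" "p (col_rep 1) = 0" using y True unfolding col_rows_def by auto
    have G: "\<forall>r<L. p r = 0 \<longrightarrow> r \<le> col_rep 1"
    proof (intro allI impI)
      fix r assume "r < L" "p r = 0"
      then have "r \<in> col_rows 1" using gpos unfolding col_rows_def by auto
      then show "r \<le> col_rep 1" using col_rep_props(2)[of 1 r] \<open>col_rows j \<noteq> {}\<close> True by simp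
    qed
    show ?thesis using add_box_first_col[OF yz G] desc_state_upd[OF assms] desc_state_1 True by simp
  next
    case False
    then have j2: "2 \<le> j" using j1 by simp
    have yL: "col_rep j < L" "p (col_rep j) < j" "j \<le> g (col_rep j)" using y unfolding col_rows_def by auto
    have Fy: "desc_state D j (col_rep j) = j - 1" using yL unfolding desc_state_def by (simp add: max_def)
    have G: "\<forall>r<L. desc_state D j r = j - 1 \<longrightarrow> col_rep j \<le> r"
      using desc_state_topmost[OF assms j2] .
    show ?thesis using add_box_later_col[OF j2 yL(1) Fy G] desc_state_upd[OF assms] by simp
  qed
qed

lemma run_desc_prefix:
  assumes "admissible D"
  shows "1 \<le> j \<Longrightarrow> j \<le> b \<Longrightarrow> run_word L (filter (\<lambda>d. d \<in> D) (rev [1..<j])) p = Some (desc_state D j)"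
proof (induction j)
  case 0 then show ?case by simp
next
  case (Suc j)
  show ?case
  proof (cases "j = 0")
    case True then show ?thesis using desc_state_1 by simp
  next
    case False
    then have IH: "run_word L (filter (\<lambda>d. d \<in> D) (rev [1..<j])) p = Some (desc_state D j)" using Suc by simp
    have e: "rev [1..<Suc j] = j # rev [1..<j]" using False by simp
    show ?thesis
    proof (cases "j \<in> D")
      case True
      then show ?thesis using e IH desc_state_step[OF assms True] by simp
    next
      case nd: False
      then show ?thesis using e IH desc_state_skip[OF assms nd] by simp
    qed
  qed
qed

lemma desc_state_final_bounds:
  assumes r: "r < L"
  shows "desc_state D b r \<le> g r \<and> g r \<le> Suc (desc_state D b r)"
proof (cases "p r = g r")
  case True
  have "min (g r - 1) (b - 1) < g r" using gpos[OF r] by linarith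
  then have "max (p r) (min (g r - 1) (b - 1)) = p r" using True by simp
  then have "desc_state D b r = p r" unfolding desc_state_def using r True by simp
  then show ?thesis using True by simp
next
  case False
  then have lt: "p r < g r" using pg[of r] by simp
  then have "r \<in> col_rows (g r)" using r unfolding col_rows_def by simp
  then have "g r \<le> b" using col_rows_nonempty by blast
  then have "max (p r) (min (g r - 1) (b - 1)) = g r - 1" using lt by (auto simp: max_def min_def)
  then have "desc_state D b r = g r - 1 + (if g r < b \<and> g r \<in> D \<and> col_rep (g r) = r \<and> p r < g r then 1 else 0)"
    unfolding desc_state_def using r by simp
  then show ?thesis using gpos[OF r] by auto
qed

lemma run_desc_part:
  assumes "admissible D"
  shows "run_word L (desc_part D) p = Some (desc_state D b)"
  unfolding desc_part_def using run_desc_prefix[OF assms] a1 ab by simp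

lemma sweep_inv_desc_state:
  assumes "admissible D"
  shows "sweep_inv L (desc_state D b) g (asc_part D)"
proof -
  define hD where "hD = desc_state D b"
  have dp: "run_word L (desc_part D) p = Some hD" unfolding hD_def by (rule run_desc_part[OF assms])
  have pm: "\<And>r. p r \<le> hD r" using run_word_mono[OF dp] by blast
  have Dsub: "D \<subseteq> {a..<b}" using admissibleD(1)[OF assms] .
  have A0: "\<forall>r. L \<le> r \<longrightarrow> hD r = g r" using out unfolding hD_def desc_state_def by simp
  have A1': "\<And>r. r < L \<Longrightarrow> hD r \<le> g r \<and> g r \<le> Suc (hD r)"
    unfolding hD_def by (rule desc_state_final_bounds)
  have A2: "\<forall>j. count_list (asc_part D) j = card {r. r<L \<and> hD r < j \<and> j \<le> g r}"
  proof
    fix j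
    have cs: "col_size j = count_list (desc_part D) j + card {r. r<L \<and> hD r < j \<and> j \<le> g r}"
      unfolding col_size_def col_rows_def using card_split[of L p hD g j] pm A1' run_word_count[OF dp, of j] by simp
    show "count_list (asc_part D) j = card {r. r<L \<and> hD r < j \<and> j \<le> g r}"
    proof (cases "a \<le> j \<and> j \<le> b")
      case True
      then show ?thesis using cs count_asc_part[of D j] count_desc_part[of D j] a1 Dsub by auto
    next
      case False
      then have "\<not> 0 < col_size j" using col_size_pos[of j] by blast
      then have "col_size j = 0" by simp
      then show ?thesis using cs count_asc_part[of D j] count_desc_part[of D j] a1 Dsub False by auto
    qed
  qed
  have A3: "\<forall>j r q. 2 \<le> j \<longrightarrow> r<L \<longrightarrow> q<L \<longrightarrow> hD r = j-1 \<longrightarrow> hD q = j-1 \<longrightarrow> g r = j \<longrightarrow> g q = j-1 \<longrightarrow> r < q"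
  proof (intro allI impI)
    fix j r q assume a: "2 \<le> j" "r < L" "q < L" "hD r = j - 1" "hD q = j - 1" "g r = j" "g q = j - 1"
    have "g q < b"
    proof -
      have "r \<in> col_rows j" using a pm[of r] unfolding col_rows_def by simp
      then have "j \<le> b" using col_rows_nonempty by blast
      then show ?thesis using a by simp
    qed
    have "desc_state D b q = g q" using a hD_def by simp
    from desc_state_full[OF a(3) this \<open>g q < b\<close>] show "r < q"
    proof (elim disjE)
      assume "p q = g q"
      then show ?thesis using frozen[of q r "j - 1"] a pm[of r] by simp
    next
      assume q: "p q < g q \<and> g q \<in> D \<and> col_rep (g q) = q"
      have "Suc (j - 1) = j" using a by simp
      then have "r \<in> col_rows (Suc (j - 1))" using a pm[of r] unfolding col_rows_def by simp
      then show ?thesis using col_rep_below[OF assms, of "j - 1" r] q a by simp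
    qed
  qed
  show ?thesis unfolding sweep_inv_def hD_def[symmetric] using A0 A1' A2 A3 by blast
qed

lemma admissible_runs:
  assumes "admissible D"
  shows "run_word L (hook_word D) p = Some g"
proof -
  have "run_word L (asc_part D) (desc_state D b) = Some g"
    using run_of_sweep_inv[OF sorted_asc_part _ sweep_inv_desc_state[OF assms]] gpos by blast
  then show ?thesis unfolding hook_word_def using run_desc_part[OF assms] by (simp add: run_word_append)
qed

lemma set_desc_part: "set (desc_part D) = {j. j \<in> D \<and> 1 \<le> j \<and> j < b}"
  unfolding desc_part_def by auto

(* If a hook word runs from p to g, every spanning column is a letter of its decreasing part:
   the row carrying boxes in columns j and j + 1 must pass column j before the increasing part. *)
lemma run_spans_in_desc:
  assumes dp: "run_word L (desc_part D) p = Some hD" and sp: "run_word L (asc_part D) hD = Some g"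
    and "spans j"
  shows "j \<in> D"
proof -
  obtain r where r: "r \<in> col_rows j" "r \<in> col_rows (Suc j)"
    using \<open>spans j\<close> unfolding spans_def by blast
  then have "r < L" "p r < j" "Suc j \<le> g r" unfolding col_rows_def by auto
  then have "j \<le> hD r" using sweep_invD(3)[OF sweep_inv_of_run[OF sorted_asc_part sp], of r] by simp
  then have "j \<in> set (desc_part D)" using run_word_pass[OF dp \<open>p r < j\<close>] by blast
  then show "j \<in> D" using set_desc_part by blast
qed

(* If a hook word runs from p to g, each letter of its decreasing part is a spanning column or
   an NE column: otherwise the row moved by that letter would violate the nc border strip
   conditions or the order in which the decreasing part moves rows. *)
lemma run_desc_spans_or_ne:
  assumes Dsub: "D \<subseteq> {a..<b}"
    and dp: "run_word L (desc_part D) p = Some hD" and sp: "run_word L (asc_part D) hD = Some g"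
    and jD: "j \<in> D"
  shows "spans j \<or> ne_col j"
proof (rule ccontr)
  assume nn: "\<not> (spans j \<or> ne_col j)"
  note S = sweep_invD[OF sweep_inv_of_run[OF sorted_asc_part sp]]
  have pm: "\<And>r. p r \<le> hD r" using run_word_mono[OF dp] by blast
  have jr: "a \<le> j" "j < b" using Dsub jD by auto
  then have j1: "1 \<le> j" using a1 by simp
  have ne: "col_rows j \<noteq> {}" "col_rows (Suc j) \<noteq> {}" using col_rows_nonempty jr by auto
  then obtain r1 r2 where r12: "r1 \<in> col_rows (Suc j)" "r2 \<in> col_rows j" "\<not> r1 < r2" using nn unfolding ne_col_def by blast
  have "r1 \<noteq> r2" using nn r12 unfolding spans_def by blast
  then have r21: "r2 < r1" using r12 by simp
  have c1: "card {r. r < L \<and> p r < j \<and> j \<le> hD r} = 1"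
    using run_word_count[OF dp, of j] count_desc_part[of D j] jD jr j1 by simp
  then obtain x where x: "x < L" "p x < j" "j \<le> hD x"
    using card_pos_ex[of L "\<lambda>r. p r < j \<and> j \<le> hD r"] by auto
  have xs: "x \<in> {r. r < L \<and> p r < j \<and> j \<le> hD r}" using x by simp
  have gx: "g x = j"
  proof (rule ccontr)
    assume "g x \<noteq> j"
    then have "Suc j \<le> g x" using x S(2)[of x] by simp
    then have "x \<in> col_rows j" "x \<in> col_rows (Suc j)" using x S(2)[of x] unfolding col_rows_def by auto
    then show False using nn unfolding spans_def by blast
  qed
  have hx: "hD x = j" using x gx S(2)[of x] by simp
  have r1L: "r1 < L" "p r1 \<le> j" "Suc j \<le> g r1" using r12 unfolding col_rows_def by auto
  have "j \<le> hD r1" using S(3)[of r1] r1L by simp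
  have r1x: "r1 < x"
  proof (cases "hD r1 = j")
    case True
    then have "g r1 = Suc j" using S(3)[of r1] r1L by simp
    then show ?thesis using S(5)[of "Suc j" r1 x] r1L x hx gx True j1 by simp
  next
    case False
    then have "Suc j \<le> hD r1" using \<open>j \<le> hD r1\<close> by simp
    have "Suc j \<in> set (desc_part D)" using run_word_pass[OF dp, of r1 "Suc j"] r1L \<open>Suc j \<le> hD r1\<close> by simp
    moreover have "x \<noteq> r1" using gx r1L by auto
    ultimately show ?thesis
      using run_word_ord[OF desc_part_decreasing dp, of "Suc j" r1 x] j1 r1L \<open>Suc j \<le> hD r1\<close> x hx by simp
  qed
  show False
  proof (cases "j = 1")
    case True
    then have "p x = 0" using x by simp
    then have "p r1 = 0" using prefix[of r1 x] r1x x by simp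
    then have "r1 \<in> col_rows 1" "r1 \<in> col_rows 2" using r1L gpos[of r1] True unfolding col_rows_def by auto
    then show False using nn True unfolding spans_def by (simp add: numeral_2_eq_2)
  next
    case False
    then have j2: "2 \<le> j" using j1 by simp
    have r2L: "r2 < L" "p r2 < j" "j \<le> g r2" using r12 unfolding col_rows_def by auto
    have "r2 \<noteq> x" using r21 r1x by simp
    have h2: "hD r2 = j - 1"
    proof (rule ccontr)
      assume "hD r2 \<noteq> j - 1"
      then have "j \<le> hD r2" using S(3)[of r2] r2L by simp
      then have "r2 \<in> {r. r < L \<and> p r < j \<and> j \<le> hD r}" using r2L by simp
      then show False using card_1_eq[OF c1 _ xs] \<open>r2 \<noteq> x\<close> by blast
    qed
    have "j \<in> set (desc_part D)" using set_desc_part jD jr j1 by simp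
    then have "x < r2" using run_word_ord[OF desc_part_decreasing dp, of j x r2] j2 x r2L \<open>r2 \<noteq> x\<close> h2 by simp
    then show False using r21 r1x by simp
  qed
qed

lemma runs_admissible:
  assumes Dsub: "D \<subseteq> {a..<b}" and w: "run_word L (hook_word D) p = Some g"
  shows "admissible D"
proof -
  obtain hD where dp: "run_word L (desc_part D) p = Some hD" and sp: "run_word L (asc_part D) hD = Some g"
    using w unfolding hook_word_def by (cases "run_word L (desc_part D) p") (auto simp: run_word_append)
  show ?thesis unfolding admissible_def
    using Dsub run_spans_in_desc[OF dp sp] run_desc_spans_or_ne[OF Dsub dp sp] by blast
qed

lemma col_size_zero: "\<not> (a \<le> j \<and> j \<le> b) \<Longrightarrow> col_size j = 0"
  using col_size_pos[of j] by auto

lemma count_hook_word: "D \<subseteq> {a..<b} \<Longrightarrow> count_list (hook_word D) j = col_size j"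
proof -
  assume D: "D \<subseteq> {a..<b}"
  show ?thesis
  proof (cases "a \<le> j \<and> j \<le> b")
    case True
    then have "0 < col_size j" using col_size_pos by simp
    then show ?thesis unfolding hook_word_def using count_asc_part[of D j] count_desc_part[of D j] True a1 D by auto
  next
    case False
    then show ?thesis unfolding hook_word_def using count_asc_part[of D j] count_desc_part[of D j] col_size_zero[OF False] D by auto
  qed
qed

lemma set_hook_word: "D \<subseteq> {a..<b} \<Longrightarrow> set (hook_word D) = {a..b}"
proof -
  assume D: "D \<subseteq> {a..<b}"
  have "\<And>j. j \<in> set (hook_word D) \<longleftrightarrow> 0 < col_size j"
    using count_hook_word[OF D] count_list_0_iff by (metis neq0_conv)
  then show ?thesis using col_size_pos by auto
qed

lemma last_asc_part: "D \<subseteq> {a..<b} \<Longrightarrow> b \<in> set (asc_part D) \<and> last (asc_part D) = b"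
proof -
  assume D: "D \<subseteq> {a..<b}"
  have "0 < col_size b" using col_size_pos ab by simp
  then have "0 < count_list (asc_part D) b" using count_asc_part[of D b] D a1 ab by auto
  then have bin: "b \<in> set (asc_part D)" by (rule count_pos_in)
  then have ne: "asc_part D \<noteq> []" by auto
  have le: "\<forall>x\<in>set (asc_part D). x \<le> b"
  proof
    fix x assume "x \<in> set (asc_part D)"
    then have "0 < count_list (asc_part D) x" by (metis count_list_0_iff neq0_conv)
    then show "x \<le> b" using count_asc_part[of D x] by (auto split: if_splits)
  qed
  have "last (asc_part D) \<in> set (asc_part D)" using ne by simp
  then have "last (asc_part D) \<le> b" using le by blast
  moreover have "b \<le> last (asc_part D)"
  proof -
    obtain i where i: "i < length (asc_part D)" "asc_part D ! i = b" using bin by (metis in_set_conv_nth)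
    then have "asc_part D ! i \<le> asc_part D ! (length (asc_part D) - 1)" using sorted_nth_mono[OF sorted_asc_part[of D], of i "length (asc_part D) - 1"] by simp
    then show ?thesis using i ne by (simp add: last_conv_nth)
  qed
  ultimately show ?thesis using bin by simp
qed

lemma reverse_hookword_hook_word: "D \<subseteq> {a..<b} \<Longrightarrow> reverse_hookword (hook_word D)"
proof -
  assume D: "D \<subseteq> {a..<b}"
  have "\<forall>x\<in>set (desc_part D). x < last (asc_part D)" using last_asc_part[OF D] set_desc_part by auto
  moreover have "asc_part D \<noteq> []" using last_asc_part[OF D] by auto
  ultimately show ?thesis unfolding hook_word_def using reverse_hookwordI[OF sorted_asc_part[of D] _ desc_part_decreasing[of D]] by blast
qed

(* D is recovered as the set of letters after the last occurrence of b, so hook_word is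
   injective. *)
lemma hook_word_desc_set:
  assumes D: "D \<subseteq> {a..<b}"
  shows "set (drop (length (hook_word D) - length (takeWhile (\<lambda>x. x \<noteq> b) (rev (hook_word D)))) (hook_word D)) = D"
proof -
  have bv: "\<forall>x\<in>set (rev (desc_part D)). x \<noteq> b" using set_desc_part by auto
  have ne: "asc_part D \<noteq> []" using last_asc_part[OF D] by auto
  have "rev (asc_part D) = rev (butlast (asc_part D) @ [last (asc_part D)])" using append_butlast_last_id[OF ne] by simp
  then have u': "rev (asc_part D) = b # rev (butlast (asc_part D))" using last_asc_part[OF D] by simp
  have "takeWhile (\<lambda>x. x \<noteq> b) (rev (hook_word D)) = rev (desc_part D)"
  proof -
    have r: "rev (hook_word D) = rev (desc_part D) @ rev (asc_part D)" unfolding hook_word_def by simp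
    have t: "takeWhile (\<lambda>x. x \<noteq> b) (rev (desc_part D) @ rev (asc_part D)) = rev (desc_part D) @ takeWhile (\<lambda>x. x \<noteq> b) (rev (asc_part D))"
      by (rule takeWhile_append2) (use bv in blast)
    have e: "takeWhile (\<lambda>x. x \<noteq> b) (rev (asc_part D)) = []" unfolding u' by simp
    show ?thesis unfolding r t e by simp
  qed
  then have "drop (length (hook_word D) - length (takeWhile (\<lambda>x. x \<noteq> b) (rev (hook_word D)))) (hook_word D) = desc_part D"
    unfolding hook_word_def by simp
  then show ?thesis using set_desc_part D a1 by auto
qed

lemma inj_hook_word: "inj_on hook_word {D. D \<subseteq> {a..<b}}"
proof (rule inj_onI)
  fix D1 D2 assume "D1 \<in> {D. D \<subseteq> {a..<b}}" "D2 \<in> {D. D \<subseteq> {a..<b}}" "hook_word D1 = hook_word D2"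
  then have h: "D1 \<subseteq> {a..<b}" "D2 \<subseteq> {a..<b}" "hook_word D1 = hook_word D2" by auto
  define f where "f w = set (drop (length w - length (takeWhile (\<lambda>x. x \<noteq> b) (rev w))) w)" for w
  have "f (hook_word D1) = D1" "f (hook_word D2) = D2" using hook_word_desc_set[OF h(1)] hook_word_desc_set[OF h(2)] unfolding f_def by auto
  then show "D1 = D2" using h(3) by metis
qed

lemma hook_word_cases:
  assumes cw: "\<And>j. count_list w j = col_size j" and rh: "reverse_hookword w"
  shows "\<exists>D. D \<subseteq> {a..<b} \<and> w = hook_word D"
proof -
  obtain u v where uv: "w = u @ v" "sorted u" "u \<noteq> []" "sorted_wrt (>) v" "\<forall>x\<in>set v. x < last u"
    using reverse_hookwordE[OF rh] by blast
  have inw: "\<And>x. x \<in> set w \<Longrightarrow> a \<le> x \<and> x \<le> b"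
  proof -
    fix x assume "x \<in> set w"
    then have "0 < count_list w x" by (metis count_list_0_iff neq0_conv)
    then show "a \<le> x \<and> x \<le> b" using cw col_size_pos by simp
  qed
  define D where "D = set v"
  have "last u \<in> set w" using uv by simp
  then have "last u \<le> b" using inw by blast
  then have Dsub: "D \<subseteq> {a..<b}" unfolding D_def using uv inw by fastforce
  have "sorted_wrt (<) (rev v)" using uv(4) by (simp add: sorted_wrt_rev)
  then have dv: "distinct v" by (simp add: strict_sorted_iff)
  have vd: "v = desc_part D"
  proof -
    have "sorted_wrt (<) (rev v)" using uv(4) by (simp add: sorted_wrt_rev)
    moreover have "sorted_wrt (<) (rev (desc_part D))" using desc_part_decreasing by (simp add: sorted_wrt_rev)
    moreover have "set (rev v) = set (rev (desc_part D))" using set_desc_part Dsub a1 unfolding D_def by auto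
    ultimately have "rev v = rev (desc_part D)"
      using sorted_distinct_set_unique[of "rev v" "rev (desc_part D)"] by (simp add: strict_sorted_iff)
    then show ?thesis by simp
  qed
  have cu: "\<And>j. count_list u j = count_list (asc_part D) j"
  proof -
    fix j
    have cv: "count_list v j = (if j \<in> D then 1 else 0)" using dv count_distinct D_def by auto
    have "count_list u j = col_size j - (if j \<in> D then 1 else 0)" using cw[of j] uv(1) cv by simp
    then show "count_list u j = count_list (asc_part D) j"
      using count_asc_part[of D j] col_size_zero[of j] Dsub a1 by (auto split: if_splits)
  qed
  have "mset u = mset (asc_part D)" by (simp add: multiset_eq_iff count_mset cu)
  then have "sort u = asc_part D" using properties_for_sort[of "asc_part D" u] sorted_asc_part by simp
  then have "u = asc_part D" using sorted_sort_id[OF uv(2)] by simp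
  then show ?thesis using uv(1) vd Dsub unfolding hook_word_def by blast
qed

lemma ne_col_range: "ne_col j \<Longrightarrow> a \<le> j \<and> j < b"
  using col_rows_nonempty[of j] col_rows_nonempty[of "Suc j"] unfolding ne_col_def by auto

lemma ne_col_not_spans: "ne_col j \<Longrightarrow> \<not> spans j"
  unfolding ne_col_def spans_def by blast

(* Admissible sets are the spanning columns plus an arbitrary subset of the NE columns. *)
lemma card_admissible: "card {D. admissible D} = 2 ^ card {j. ne_col j}"
proof -
  define SS where "SS = {j. spans j}"
  define NN where "NN = {j. ne_col j}"
  have "NN \<subseteq> {a..<b}" unfolding NN_def using ne_col_range by auto
  then have finN: "finite NN" using finite_subset by blast
  have disj: "SS \<inter> NN = {}" unfolding SS_def NN_def using ne_col_not_spans by auto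
  have eq: "{D. admissible D} = (\<lambda>E. SS \<union> E) ` Pow NN"
  proof (intro set_eqI iffI)
    fix D assume "D \<in> {D. admissible D}"
    then have g: "admissible D" by simp
    have "D = SS \<union> (D - SS)" using admissibleD(2)[OF g] unfolding SS_def by auto
    moreover have "D - SS \<subseteq> NN" using admissibleD(3)[OF g] unfolding SS_def NN_def by auto
    ultimately show "D \<in> (\<lambda>E. SS \<union> E) ` Pow NN" by blast
  next
    fix D assume "D \<in> (\<lambda>E. SS \<union> E) ` Pow NN"
    then obtain E where E: "E \<subseteq> NN" "D = SS \<union> E" by blast
    have "D \<subseteq> {a..<b}" using E spans_range ne_col_range unfolding SS_def NN_def by auto
    moreover have "\<forall>j. spans j \<longrightarrow> j \<in> D" using E unfolding SS_def by auto
    moreover have "\<forall>j\<in>D. spans j \<or> ne_col j" using E unfolding SS_def NN_def by auto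
    ultimately show "D \<in> {D. admissible D}" unfolding admissible_def by simp
  qed
  have inj: "inj_on (\<lambda>E. SS \<union> E) (Pow NN)"
  proof (rule inj_onI)
    fix E1 E2 assume "E1 \<in> Pow NN" "E2 \<in> Pow NN" "SS \<union> E1 = SS \<union> E2"
    then show "E1 = E2" using disj by blast
  qed
  have "card {D. admissible D} = card (Pow NN)" unfolding eq using card_image[OF inj] .
  also have "\<dots> = 2 ^ card NN" using card_Pow[OF finN] by simp
  finally show ?thesis unfolding NN_def .
qed

lemma card_runs_CRHW:
  "card {w \<in> CRHW (sum col_size {a..b}). run_word L w p = Some g} = 2 ^ card {j. ne_col j}"
proof -
  have eq: "{w \<in> CRHW (sum col_size {a..b}). run_word L w p = Some g} = hook_word ` {D. admissible D}"
  proof (intro set_eqI iffI)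
    fix w assume "w \<in> {w \<in> CRHW (sum col_size {a..b}). run_word L w p = Some g}"
    then have w: "w \<in> CRHW (sum col_size {a..b})" "run_word L w p = Some g" by auto
    have cw: "\<And>j. count_list w j = col_size j" using run_word_count[OF w(2)] unfolding col_size_def col_rows_def by simp
    have "reverse_hookword w" using w(1) unfolding CRHW_def by simp
    then obtain D where D: "D \<subseteq> {a..<b}" "w = hook_word D" using hook_word_cases[OF cw] by blast
    then have "admissible D" using runs_admissible w(2) by simp
    then show "w \<in> hook_word ` {D. admissible D}" using D by blast
  next
    fix w assume "w \<in> hook_word ` {D. admissible D}"
    then obtain D where D: "admissible D" "w = hook_word D" by blast
    have Ds: "D \<subseteq> {a..<b}" using admissibleD(1)[OF D(1)] .
    have len: "length w = sum col_size {a..b}"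
    proof -
      have "sum (count_list w) {a..b} = length w" using sum_count_set[of w "{a..b}"] set_hook_word[OF Ds] D by simp
      moreover have "sum (count_list w) {a..b} = sum col_size {a..b}" using count_hook_word[OF Ds] D by simp
      ultimately show ?thesis by simp
    qed
    have "w \<in> CRHW (sum col_size {a..b})" unfolding CRHW_def connected_word_def
      using len set_hook_word[OF Ds] reverse_hookword_hook_word[OF Ds] D a1 by auto
    then show "w \<in> {w \<in> CRHW (sum col_size {a..b}). run_word L w p = Some g}" using admissible_runs[OF D(1)] D by simp
  qed
  have "inj_on hook_word {D. admissible D}" using inj_hook_word by (rule inj_on_subset) (use admissibleD in auto)
  then have "card (hook_word ` {D. admissible D}) = card {D. admissible D}" by (rule card_image)
  then show ?thesis using eq card_admissible by simp
qed

lemma NE_rows: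
  assumes rows: "\<And>i j. (i, j) \<in> S \<longleftrightarrow> (\<exists>r. i = Suc r \<and> r \<in> col_rows j)"
  shows "NE S = {j. ne_col j}"
proof (intro set_eqI iffI)
  fix j assume "j \<in> NE S"
  then have h: "j \<in> supp S" "\<exists>i. (i, j + 1) \<in> S" "\<forall>i1 i2. (i1, j + 1) \<in> S \<and> (i2, j) \<in> S \<longrightarrow> i1 < i2"
    unfolding NE_def by auto
  obtain i where "(i, j) \<in> S" using h(1) unfolding supp_def by force
  then have "col_rows j \<noteq> {}" using rows by blast
  moreover have "col_rows (Suc j) \<noteq> {}" using h(2) rows by auto
  moreover have "\<forall>r1\<in>col_rows (Suc j). \<forall>r2\<in>col_rows j. r1 < r2"
  proof (intro ballI)
    fix r1 r2 assume "r1 \<in> col_rows (Suc j)" "r2 \<in> col_rows j"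
    then have "(Suc r1, j + 1) \<in> S" "(Suc r2, j) \<in> S" using rows by auto
    then show "r1 < r2" using h(3) by fastforce
  qed
  ultimately show "j \<in> {j. ne_col j}" unfolding ne_col_def by simp
next
  fix j assume "j \<in> {j. ne_col j}"
  then have h: "col_rows j \<noteq> {}" "col_rows (Suc j) \<noteq> {}" "\<forall>r1\<in>col_rows (Suc j). \<forall>r2\<in>col_rows j. r1 < r2"
    unfolding ne_col_def by auto
  obtain r where "r \<in> col_rows j" using h(1) by blast
  then have "(Suc r, j) \<in> S" using rows by blast
  then have "j \<in> supp S" unfolding supp_def by force
  moreover have "\<exists>i. (i, j + 1) \<in> S" using h(2) rows by auto
  moreover have "\<forall>i1 i2. (i1, j + 1) \<in> S \<and> (i2, j) \<in> S \<longrightarrow> i1 < i2"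
  proof (intro allI impI)
    fix i1 i2 assume "(i1, j + 1) \<in> S \<and> (i2, j) \<in> S"
    then obtain r1 r2 where "i1 = Suc r1" "r1 \<in> col_rows (Suc j)" "i2 = Suc r2" "r2 \<in> col_rows j"
      using rows by fastforce
    then show "i1 < i2" using h(3) by simp
  qed
  ultimately show "j \<in> NE S" unfolding NE_def by simp
qed

lemma card_rows:
  assumes rows: "\<And>i j. (i, j) \<in> S \<longleftrightarrow> (\<exists>r. i = Suc r \<and> r \<in> col_rows j)"
  shows "card S = sum col_size {a..b}"
proof -
  have "S = (\<lambda>(j, r). (Suc r, j)) ` (SIGMA j:{a..b}. col_rows j)"
  proof (intro set_eqI iffI)
    fix x assume "x \<in> S"
    then obtain i j where x: "x = (i, j)" "(i, j) \<in> S" by (cases x) auto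
    then obtain r where r: "i = Suc r" "r \<in> col_rows j" using rows by blast
    then have "a \<le> j \<and> j \<le> b" using col_rows_nonempty by blast
    then show "x \<in> (\<lambda>(j, r). (Suc r, j)) ` (SIGMA j:{a..b}. col_rows j)" using x r by force
  next
    fix x assume "x \<in> (\<lambda>(j, r). (Suc r, j)) ` (SIGMA j:{a..b}. col_rows j)"
    then obtain j r where "x = (Suc r, j)" "r \<in> col_rows j" by (auto simp: image_iff)
    then show "x \<in> S" using rows by simp
  qed
  moreover have "inj_on (\<lambda>(j, r). (Suc r, j)) (SIGMA j:{a..b}. col_rows j)" by (auto simp: inj_on_def)
  ultimately have "card S = card (SIGMA j:{a..b}. col_rows j)" by (simp add: card_image)
  also have "\<dots> = sum col_size {a..b}" unfolding col_size_def using finite_col_rows by simp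
  finally show ?thesis .
qed

end

lemma skew_heights:
  assumes "length a \<le> length b"
  shows "(i, j) \<in> skew b a \<longleftrightarrow> 1 \<le> i \<and> i - 1 < length b \<and> heights (length b) a (i - 1) < j \<and> j \<le> heights (length b) b (i - 1)"
proof -
  define L where "L = length b"
  define m where "m = L - length a"
  have rem: "(i, j) \<in> {(L - length a + i', j') | i' j'. 1 \<le> i' \<and> i' \<le> length a \<and> 1 \<le> j' \<and> j' \<le> a!(i'-1)}
     \<longleftrightarrow> m < i \<and> i \<le> L \<and> 1 \<le> j \<and> j \<le> a!(i - 1 - m)"
  proof
    assume "(i, j) \<in> {(L - length a + i', j') | i' j'. 1 \<le> i' \<and> i' \<le> length a \<and> 1 \<le> j' \<and> j' \<le> a!(i'-1)}"
    then obtain i' where "i = m + i'" "1 \<le> i'" "i' \<le> length a" "1 \<le> j" "j \<le> a!(i'-1)" unfolding m_def by blast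
    then show "m < i \<and> i \<le> L \<and> 1 \<le> j \<and> j \<le> a!(i - 1 - m)" using assms unfolding m_def L_def by auto
  next
    assume h: "m < i \<and> i \<le> L \<and> 1 \<le> j \<and> j \<le> a!(i - 1 - m)"
    then have "i = L - length a + (i - m) \<and> 1 \<le> i - m \<and> i - m \<le> length a \<and> 1 \<le> j \<and> j \<le> a!((i - m) - 1)"
      using assms unfolding m_def L_def by auto
    then show "(i, j) \<in> {(L - length a + i', j') | i' j'. 1 \<le> i' \<and> i' \<le> length a \<and> 1 \<le> j' \<and> j' \<le> a!(i'-1)}" by blast
  qed
  have "(i, j) \<in> skew b a \<longleftrightarrow> (1 \<le> i \<and> i \<le> L \<and> 1 \<le> j \<and> j \<le> b!(i-1)) \<and> \<not> (m < i \<and> i \<le> L \<and> 1 \<le> j \<and> j \<le> a!(i - 1 - m))"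
    unfolding skew_def diagram_def using rem unfolding L_def by blast
  also have "\<dots> \<longleftrightarrow> 1 \<le> i \<and> i - 1 < L \<and> heights L a (i - 1) < j \<and> j \<le> heights L b (i - 1)"
    unfolding heights_def m_def using assms unfolding L_def by (auto simp: not_le)
  finally show ?thesis unfolding L_def .
qed

lemma skew_rows:
  assumes "length a \<le> length b"
  shows "(i, j) \<in> skew b a \<longleftrightarrow>
    (\<exists>r. i = Suc r \<and> r < length b \<and> heights (length b) a r < j \<and> j \<le> heights (length b) b r)"
  using skew_heights[OF assms, of i j] by (cases i) auto

lemma heights_pos: "is_comp g \<Longrightarrow> r < length g \<Longrightarrow> 1 \<le> heights (length g) g r"
  using heights_zero_iff[of g "length g" r] by simp

lemma heights_zero_prefix:
  assumes "is_comp g" "length g \<le> L" "r' \<le> r" "r < L" "heights L g r = 0"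
  shows "heights L g r' = 0"
  using assms heights_zero_iff[OF assms(1,2)] by simp

lemma interval_supp:
  assumes "interval_shape S" "finite (supp S)" "supp S \<noteq> {}"
  shows "supp S = {Min (supp S)..Max (supp S)}"
proof
  show "supp S \<subseteq> {Min (supp S)..Max (supp S)}" using assms(2) by auto
  show "{Min (supp S)..Max (supp S)} \<subseteq> supp S"
  proof
    fix j assume "j \<in> {Min (supp S)..Max (supp S)}"
    moreover have "Min (supp S) \<in> supp S" "Max (supp S) \<in> supp S" using assms(2,3) by simp_all
    ultimately show "j \<in> supp S" using assms(1) unfolding interval_shape_def atLeastAtMost_iff by blast
  qed
qed

lemma cless_run:
  assumes "is_comp a" "is_comp b" "cless a b"
  shows "length a \<le> length b"
    and "\<exists>w. w \<noteq> [] \<and> run_word (length b) w (heights (length b) a) = Some (heights (length b) b)"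
proof -
  obtain w where w: "w \<noteq> []" "apply_word w a = Some b" using cless_apply_word[OF assms(3,1)] by blast
  show lab: "length a \<le> length b" using apply_word_comp[OF assms(1) w(2)] by simp
  show "\<exists>w. w \<noteq> [] \<and> run_word (length b) w (heights (length b) a) = Some (heights (length b) b)"
    using w apply_word_iff_run[OF assms(1,2) lab] by blast
qed

lemma interval_columns:
  fixes p g :: "nat \<Rightarrow> nat"
  assumes rows: "\<And>i j. (i, j) \<in> S \<longleftrightarrow> (\<exists>r. i = Suc r \<and> r < L \<and> p r < j \<and> j \<le> g r)"
    and "interval_shape S" and "S \<noteq> {}"
  shows "1 \<le> Min (supp S)" and "Min (supp S) \<le> Max (supp S)"
    and "\<And>j. (\<exists>r<L. p r < j \<and> j \<le> g r) \<longleftrightarrow> Min (supp S) \<le> j \<and> j \<le> Max (supp S)"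
proof -
  have col: "\<And>j. j \<in> supp S \<longleftrightarrow> (\<exists>r<L. p r < j \<and> j \<le> g r)"
  proof
    fix j assume "j \<in> supp S"
    then obtain i where "(i, j) \<in> S" unfolding supp_def by force
    then show "\<exists>r<L. p r < j \<and> j \<le> g r" using rows by blast
  next
    fix j assume "\<exists>r<L. p r < j \<and> j \<le> g r"
    then obtain r where "(Suc r, j) \<in> S" using rows by blast
    then show "j \<in> supp S" unfolding supp_def by force
  qed
  have fin: "finite (supp S)"
    by (rule finite_subset[of _ "\<Union>r<L. {..g r}"]) (auto simp: col)
  have ne: "supp S \<noteq> {}" using \<open>S \<noteq> {}\<close> unfolding supp_def by blast
  then have "Min (supp S) \<in> supp S" using fin by simp
  then show "1 \<le> Min (supp S)" using col by fastforce
  show "Min (supp S) \<le> Max (supp S)" using fin ne by simp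
  have "supp S = {Min (supp S)..Max (supp S)}" using interval_supp assms(2) fin ne by blast
  then show "\<And>j. (\<exists>r<L. p r < j \<and> j \<le> g r) \<longleftrightarrow> Min (supp S) \<le> j \<and> j \<le> Max (supp S)"
    using col eqset_imp_iff atLeastAtMost_iff by metis
qed

(* The hypotheses of the theorem provide an instance of the locale strip: the rows properties
   come from the run of a word from alpha to beta, the remaining ones from the nc border strip
   conditions. *)
lemma strip_of_skew:
  assumes comp: "is_comp a" "is_comp b" and ab: "cless a b" and nc: "nc_border_strip (skew b a)"
  defines "L \<equiv> length b" and "p \<equiv> heights (length b) a" and "g \<equiv> heights (length b) b"
    and "S \<equiv> skew b a"
  shows "strip L p g (Min (supp S)) (Max (supp S))"
proof -
  have lab: "length a \<le> length b" using cless_run(1)[OF comp ab] .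
  obtain w0 where w0: "w0 \<noteq> []" "run_word L w0 p = Some g"
    using cless_run(2)[OF comp ab] unfolding L_def p_def g_def by blast
  have rows: "\<And>i j. (i, j) \<in> S \<longleftrightarrow> (\<exists>r. i = Suc r \<and> r < L \<and> p r < j \<and> j \<le> g r)"
    using skew_rows[OF lab] unfolding S_def L_def p_def g_def by blast
  have "S \<noteq> {}"
  proof -
    obtain j where "j \<in> set w0" using w0(1) by (cases w0) auto
    then have "0 < card {r. r < L \<and> p r < j \<and> j \<le> g r}"
      using run_word_count[OF w0(2)] by (metis count_list_0_iff neq0_conv)
    then obtain r where "r < L" "p r < j" "j \<le> g r"
      using card_pos_ex[of L "\<lambda>r. p r < j \<and> j \<le> g r"] by blast
    then have "(Suc r, j) \<in> S" using rows by blast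
    then show ?thesis by blast
  qed
  note cols = interval_columns[OF rows _ this]
  have nc_shape: "interval_shape S"
    and nc1: "\<And>i i'. (i, 1) \<in> S \<Longrightarrow> (i, 2) \<in> S \<Longrightarrow> (i', 1) \<in> S \<Longrightarrow> i' \<le> i"
    and nc2: "\<And>i i' j. 2 \<le> j \<Longrightarrow> (i, j) \<in> S \<Longrightarrow> (i, j + 1) \<in> S \<Longrightarrow> (i', j) \<in> S \<Longrightarrow> i \<le> i'"
    using nc unfolding nc_border_strip_def S_def by blast+
  show ?thesis
  proof
    show "\<And>r. L \<le> r \<Longrightarrow> p r = 0 \<and> g r = 0" unfolding p_def g_def L_def heights_def by simp
    show "\<And>r. r < L \<Longrightarrow> 1 \<le> g r" using heights_pos[OF comp(2)] unfolding g_def L_def by blast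
    show "\<And>r. p r \<le> g r" using run_word_mono[OF w0(2)] by blast
    show "\<And>r r'. r' \<le> r \<Longrightarrow> r < L \<Longrightarrow> p r = 0 \<Longrightarrow> p r' = 0"
      using heights_zero_prefix[OF comp(1) lab] unfolding p_def L_def by blast
    show "\<And>u r v. u < L \<Longrightarrow> r < L \<Longrightarrow> 1 \<le> v \<Longrightarrow> p u = v \<Longrightarrow> g u = v \<Longrightarrow> p r \<le> v \<Longrightarrow> v < g r \<Longrightarrow> r < u"
      using run_word_frozen[OF w0(2)] by blast
    show "\<And>r r'. r < L \<Longrightarrow> p r < 1 \<Longrightarrow> 2 \<le> g r \<Longrightarrow> r' < L \<Longrightarrow> p r' < 1 \<Longrightarrow> r' \<le> r"
    proof -
      fix r r' assume h: "r < L" "p r < 1" "2 \<le> g r" "r' < L" "p r' < 1"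
      have "1 \<le> g r'" using heights_pos[OF comp(2)] h(4) unfolding g_def L_def by blast
      then have "(Suc r, 1) \<in> S" "(Suc r, 2) \<in> S" "(Suc r', 1) \<in> S" using rows h by auto
      then show "r' \<le> r" using nc1 by fastforce
    qed
    show "\<And>j r r'. 2 \<le> j \<Longrightarrow> r < L \<Longrightarrow> p r < j \<Longrightarrow> Suc j \<le> g r \<Longrightarrow> r' < L \<Longrightarrow> p r' < j \<Longrightarrow> j \<le> g r' \<Longrightarrow> r \<le> r'"
    proof -
      fix j r r' assume h: "2 \<le> j" "r < L" "p r < j" "Suc j \<le> g r" "r' < L" "p r' < j" "j \<le> g r'"
      have "(Suc r, j) \<in> S" "(Suc r, j + 1) \<in> S" "(Suc r', j) \<in> S" using rows h by auto
      then show "r \<le> r'" using nc2[OF h(1)] by fastforce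
    qed
  qed (use cols[OF nc_shape] in auto)
qed

theorem mainTheorem17:
  fixes \<alpha> \<beta> :: "nat list" and n :: nat
  assumes "is_comp \<alpha>" and "is_comp \<beta>"
    and "cless \<alpha> \<beta>"
    and "nc_border_strip (skew \<beta> \<alpha>)"
    and "card (skew \<beta> \<alpha>) = n"
  shows "card {w \<in> CRHW n. apply_word w \<alpha> = Some \<beta>} = 2 ^ card (NE (skew \<beta> \<alpha>))"
proof -
  define L p g S where "L = length \<beta>" and "p = heights L \<alpha>" and "g = heights L \<beta>"
    and "S = skew \<beta> \<alpha>"
  have lab: "length \<alpha> \<le> L" using cless_run(1)[OF assms(1-3)] unfolding L_def .
  interpret st: strip L p g "Min (supp S)" "Max (supp S)"
    using strip_of_skew[OF assms(1-4)] unfolding L_def p_def g_def S_def .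
  have rows: "\<And>i j. (i, j) \<in> S \<longleftrightarrow> (\<exists>r. i = Suc r \<and> r \<in> st.col_rows j)"
    unfolding st.col_rows_def mem_Collect_eq using skew_rows[OF lab[unfolded L_def]]
    by (simp add: S_def p_def g_def L_def)
  have n: "n = sum st.col_size {Min (supp S)..Max (supp S)}"
    using st.card_rows[OF rows] assms(5) unfolding S_def by simp
  have runs: "\<And>w. apply_word w \<alpha> = Some \<beta> \<longleftrightarrow> run_word L w p = Some g"
    using apply_word_iff_run[OF assms(1,2) lab[unfolded L_def]] unfolding L_def p_def g_def .
  have "card {w \<in> CRHW n. apply_word w \<alpha> = Some \<beta>} = 2 ^ card {j. st.ne_col j}"
    unfolding runs n by (rule st.card_runs_CRHW)
  then show ?thesis using st.NE_rows[OF rows] unfolding S_def by simp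
qed

end
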